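(* Let $\Phi$ be of type $A_n$. Then (1) the face polynomial of $\mathcal P$ is $f_{\mathcal P}(x)=\sum_{i=0}^{n-1}\binom{n+1}{i+2}(2^{i+2}-2)x^i$; (2) the face polynomial of $\mathcal H$ is $f_{\mathcal H}(x)=1+\sum_{i=1}^{n}\binom{n+1}{i+1}(2^{i+1}-2)x^i$; (3) the characteristic polynomial of $\mathcal H$ is $\chi_{\mathcal H}(t)=(-1)^n n+\sum_{k=1}^n\binom{n+1}{k+1}(-1)^{n-k}t^k=(-1)^n\sum_{i=1}^n(1-t)^i$.
   Context: $\Phi$ is the root system of type $A_n$ in $E=\operatorname{span}_{\mathbb R}\Phi$ ($\dim E=n$), $\mathcal P=\operatorname{conv}(\Phi)$, and $\mathcal H$ is the central arrangement of the linear hyperplanes $\operatorname{span}_{\mathbb R}F$, $F$ a face of $\mathcal P$ of dimension $n-2$. The face polynomial of $\mathcal P$ is $\sum_F x^{\dim F}$ over the nonempty proper faces $F$ of $\mathcal P$. Regions of $\mathcal H$ are connected components of the complement of its hyperplanes; $\mathcal L(\mathcal H)$ is the set of nonempty intersections of hyperplanes of $\mathcal H$ (including $E$, the empty intersection), ordered by reverse inclusion; a face of $\mathcal H$ is a nonempty $\overline R\cap x$ with $R$ a region and $x\in\mathcal L(\mathcal H)$; $f_{\mathcal H}(x)=\sum_F x^{\dim F}$ over all faces of $\mathcal H$; $\chi_{\mathcal H}(t)=\sum_{x\in\mathcal L(\mathcal H)}\mu(x)t^{\dim x}$, where $\mu(x)$ is the Möbius function of $\mathcal L(\mathcal H)$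 from the bottom element $E$ to $x$. *)

theory Defs
  imports "HOL-Analysis.Analysis" "HOL-Computational_Algebra.Polynomial"
begin

text \<open>The root system of type A_n, realised in real^'n with CARD('n) = n+1:
  the vectors e_i - e_j with i distinct from j.\<close>
definition rootsA :: "(real^'n) set" where
  "rootsA = {axis i 1 - axis j 1 | i j. i \<noteq> j}"

definition EA :: "(real^'n) set" where
  "EA = span rootsA"

definition polytopeA :: "(real^'n) set" where
  "polytopeA = convex hull rootsA"

text \<open>The arrangement H: linear spans of the faces of P of dimension n - 2,
  where n = CARD('n) - 1, i.e. n - 2 = CARD('n) - 3.\<close>
definition arrA :: "(real^'n) set set" where
  "arrA = {span F | F. F face_of polytopeA \<and> aff_dim F = int CARD('n) - 3}"

definition face_poly_polytope :: "'a::euclidean_space set \<Rightarrow> int poly" where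
  "face_poly_polytope P =
     (\<Sum>F\<in>{F. F face_of P \<and> F \<noteq> {} \<and> F \<noteq> P}. monom 1 (nat (aff_dim F)))"

definition arr_regions :: "'a::euclidean_space set \<Rightarrow> 'a set set \<Rightarrow> 'a set set" where
  "arr_regions E H = components (E - \<Union>H)"

text \<open>Intersection poset: nonempty intersections of hyperplanes of H
  (E itself is the empty intersection); ordered by reverse inclusion.\<close>
definition arr_lattice :: "'a::euclidean_space set \<Rightarrow> 'a set set \<Rightarrow> 'a set set" where
  "arr_lattice E H = {E \<inter> \<Inter>A | A. A \<subseteq> H \<and> E \<inter> \<Inter>A \<noteq> {}}"

definition arr_faces :: "'a::euclidean_space set \<Rightarrow> 'a set set \<Rightarrow> 'a set set" where
  "arr_faces E H = {closure R \<inter> X | R X. R \<in> arr_regions E H \<and> X \<in> arr_lattice E H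
                       \<and> closure R \<inter> X \<noteq> {}}"

definition arr_face_poly :: "'a::euclidean_space set \<Rightarrow> 'a set set \<Rightarrow> int poly" where
  "arr_face_poly E H = (\<Sum>F\<in>arr_faces E H. monom 1 (nat (aff_dim F)))"

definition mobius_from :: "'a set \<Rightarrow> ('a \<Rightarrow> 'a \<Rightarrow> bool) \<Rightarrow> 'a \<Rightarrow> 'a \<Rightarrow> int" where
  "mobius_from L le b = (THE mu.
      (\<forall>y\<in>L. le b y \<longrightarrow> (\<Sum>z\<in>{z\<in>L. le b z \<and> le z y}. mu z) = (if y = b then 1 else 0))
    \<and> (\<forall>y. (y \<notin> L \<or> \<not> le b y) \<longrightarrow> mu y = 0))"

definition arr_char_poly :: "'a::euclidean_space set \<Rightarrow> 'a set set \<Rightarrow> int poly" where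
  "arr_char_poly E H =
     (\<Sum>X\<in>arr_lattice E H. monom (mobius_from (arr_lattice E H) (\<lambda>x y. y \<subseteq> x) E X) (dim X))"

end

theory Submission
  imports Defs
begin

text \<open>Realize \<open>E\<close> as the zero-sum vectors of \<open>\<real>\<^sup>n\<^sup>+\<^sup>1\<close>. A functional \<open>a\<close> is maximized on the roots
  \<open>e\<^sub>i - e\<^sub>j\<close> exactly where \<open>a\<^sub>i\<close> is maximal and \<open>a\<^sub>j\<close> minimal, so the proper faces of \<open>\<P>\<close> are the
  simplices \<open>F\<^sub>I\<^sub>J = conv {e\<^sub>i - e\<^sub>j | i \<in> I, j \<in> J}\<close> for disjoint nonempty \<open>I, J\<close>, of dimension
  \<open>|I| + |J| - 2\<close>. Those of dimension \<open>n - 2\<close> miss exactly one coordinate \<open>m\<close> and span the hyperplane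
  \<open>x\<^sub>m = 0\<close>; hence \<open>\<H>\<close> is the arrangement of coordinate hyperplanes in \<open>E\<close>. Its flats are the
  zero-sum subspaces supported on \<open>K\<close>, its regions are the sign patterns \<open>P\<close> with \<open>P \<noteq> \<emptyset>, [n+1]\<close>, and
  its faces are \<open>{0}\<close> and the sign cones of pairs \<open>(I, J)\<close>, of dimension \<open>|I| + |J| - 1\<close>. A set \<open>K\<close>
  of size \<open>k \<ge> 2\<close> carries \<open>2\<^sup>k - 2\<close> pairs with \<open>I \<union> J = K\<close>, which gives both face polynomials; the
  flat lattice is Boolean above \<open>{0}\<close>, which gives the Moebius function and \<open>\<chi>\<^sub>\<H>\<close>.\<close>

subsection \<open>Zero-sum coordinate subspaces and roots\<close>

definition zero_sum_space :: "'n set \<Rightarrow> (real^'n::finite) set" where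
  "zero_sum_space K = {x. (\<forall>k. k \<notin> K \<longrightarrow> x$k = 0) \<and> (\<Sum>k\<in>UNIV. x$k) = 0}"

definition root_vec :: "'n::finite \<Rightarrow> 'n \<Rightarrow> real^'n" where
  "root_vec i j = axis i 1 - axis j 1"

definition roots_between :: "'n::finite set \<Rightarrow> 'n set \<Rightarrow> (real^'n) set" where
  "roots_between I J = {root_vec i j | i j. i \<in> I \<and> j \<in> J}"

lemma root_vec_nth: "root_vec i j $ k = (if k = i then 1 else 0) - (if k = j then 1 else 0)"
  by (simp add: root_vec_def axis_def)

lemma inner_root_vec: "a \<bullet> root_vec i j = a$i - a$j"
  by (simp add: root_vec_def inner_diff_right inner_axis)

lemma root_vec_eq_iff:
  assumes "i \<noteq> j" "i' \<noteq> j'"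
  shows "root_vec i j = root_vec i' j' \<longleftrightarrow> i = i' \<and> j = j'"
proof
  assume "root_vec i j = root_vec i' j'"
  then have "root_vec i j $ i = root_vec i' j' $ i" "root_vec i j $ j = root_vec i' j' $ j"
    by simp_all
  then show "i = i' \<and> j = j'" using assms by (auto simp: root_vec_nth split: if_splits)
qed simp

lemma root_vec_in_zero_sum_space: "i \<in> K \<Longrightarrow> j \<in> K \<Longrightarrow> root_vec i j \<in> zero_sum_space K"
  by (auto simp: zero_sum_space_def root_vec_nth sum_subtractf)

lemma subspace_zero_sum_space: "subspace (zero_sum_space K)"
  unfolding subspace_def zero_sum_space_def
  by (auto simp: sum.distrib sum_distrib_left[symmetric])

lemma zero_in_zero_sum_space: "0 \<in> zero_sum_space K"
  by (rule subspace_0[OF subspace_zero_sum_space])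

lemma zero_sum_space_mono: "K \<subseteq> K' \<Longrightarrow> zero_sum_space K \<subseteq> zero_sum_space K'"
  by (auto simp: zero_sum_space_def)

lemma zero_sum_space_Int_coordinate_hyperplanes:
  "zero_sum_space UNIV \<inter> \<Inter>((\<lambda>m. zero_sum_space (- {m})) ` S) = zero_sum_space (- S)"
  by (auto simp: zero_sum_space_def)

lemma zero_sum_space_card_le_1:
  assumes "card K \<le> 1"
  shows "zero_sum_space K = {0}"
proof -
  have "x = 0" if x: "x \<in> zero_sum_space K" for x
  proof -
    obtain k where K: "K \<subseteq> {k}"
    proof (cases "K = {}")
      case False
      then obtain k where "k \<in> K" by auto
      with assms have "K \<subseteq> {k}" by (auto simp: card_le_Suc0_iff_eq)
      then show ?thesis by (rule that)
    qed (auto intro: that)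
    then have off: "\<And>m. m \<noteq> k \<Longrightarrow> x$m = 0" using x by (auto simp: zero_sum_space_def)
    then have "(\<Sum>m\<in>UNIV. x$m) = x$k" by (subst sum.mono_neutral_right[of UNIV "{k}"]) auto
    then have "x$k = 0" using x by (simp add: zero_sum_space_def)
    with off show ?thesis by (metis vec_eq_iff zero_index)
  qed
  then show ?thesis using zero_in_zero_sum_space by blast
qed

lemma span_roots_between:
  assumes "I \<inter> J = {}" "I \<noteq> {}" "J \<noteq> {}"
  shows "span (roots_between I J) = zero_sum_space (I \<union> J)"
proof
  show "span (roots_between I J) \<subseteq> zero_sum_space (I \<union> J)"
    by (rule span_minimal[OF _ subspace_zero_sum_space])
      (auto simp: roots_between_def intro: root_vec_in_zero_sum_space)
  show "zero_sum_space (I \<union> J) \<subseteq> span (roots_between I J)"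
  proof
    fix x :: "real^'a" assume x: "x \<in> zero_sum_space (I \<union> J)"
    obtain i0 j0 where i0: "i0 \<in> I" and j0: "j0 \<in> J" using assms by auto
    have root_in_span: "root_vec k j0 \<in> span (roots_between I J)" if "k \<in> I \<union> J" for k
    proof (cases "k \<in> I")
      case True
      then show ?thesis using j0 by (auto simp: roots_between_def intro!: span_base)
    next
      case False
      have "root_vec k j0 = root_vec i0 j0 - root_vec i0 k" by (simp add: root_vec_def)
      moreover have "root_vec i0 j0 \<in> span (roots_between I J)" "root_vec i0 k \<in> span (roots_between I J)"
        using i0 j0 False that by (auto simp: roots_between_def intro!: span_base)
      ultimately show ?thesis by (simp add: span_diff)
    qed
    have "(\<Sum>k\<in>UNIV. x$k) = (\<Sum>k\<in>I \<union> J. x$k)"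
      by (rule sum.mono_neutral_right) (use x in \<open>auto simp: zero_sum_space_def\<close>)
    then have sum0: "(\<Sum>k\<in>I \<union> J. x$k) = 0" using x by (simp add: zero_sum_space_def)
    \<comment> \<open>expansion \<open>x = \<Sum>\<^sub>k x\<^sub>k (e\<^sub>k - e\<^sub>j\<^sub>0)\<close>, valid because the coordinates of \<open>x\<close> sum to zero\<close>
    have expansion: "x = (\<Sum>k\<in>I \<union> J. x$k *\<^sub>R root_vec k j0)"
    proof (subst vec_eq_iff, intro allI)
      fix m
      have "(\<Sum>k\<in>I \<union> J. x$k *\<^sub>R root_vec k j0) $ m
           = (\<Sum>k\<in>I \<union> J. (if k = m then x$k else 0)) - (if m = j0 then 1 else 0) * (\<Sum>k\<in>I \<union> J. x$k)"
        by (simp add: root_vec_nth sum_subtractf right_diff_distrib sum_distrib_left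
            sum_distrib_right mult.commute if_distrib[of "(*) _"] cong: if_cong)
      also have "\<dots> = (if m \<in> I \<union> J then x$m else 0)"
        using sum0 by (simp add: sum.delta)
      also have "\<dots> = x$m" using x by (auto simp: zero_sum_space_def)
      finally show "x $ m = (\<Sum>k\<in>I \<union> J. x$k *\<^sub>R root_vec k j0) $ m" by simp
    qed
    show "x \<in> span (roots_between I J)"
      by (subst expansion) (intro span_sum span_mul root_in_span)
  qed
qed

lemma independent_roots_to:
  assumes "k0 \<notin> I"
  shows "inj_on (\<lambda>i. root_vec i k0) I" "independent ((\<lambda>i. root_vec i k0) ` I)"
proof -
  show inj: "inj_on (\<lambda>i. root_vec i k0) I"
    using assms by (intro inj_onI) (metis root_vec_eq_iff)
  show "independent ((\<lambda>i. root_vec i k0) ` I)"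
  proof
    assume "dependent ((\<lambda>i. root_vec i k0) ` I)"
    then obtain u v where v: "v \<in> (\<lambda>i. root_vec i k0) ` I" "u v \<noteq> 0"
      and s: "(\<Sum>v\<in>(\<lambda>i. root_vec i k0) ` I. u v *\<^sub>R v) = 0"
      by (auto simp: dependent_finite)
    then obtain i where i: "i \<in> I" "v = root_vec i k0" by auto
    have "(\<Sum>i'\<in>I. u (root_vec i' k0) *\<^sub>R root_vec i' k0) = 0"
      using s by (simp add: sum.reindex[OF inj])
    then have "(\<Sum>i'\<in>I. u (root_vec i' k0) *\<^sub>R root_vec i' k0) $ i = 0" by simp
    moreover have "(\<Sum>i'\<in>I. u (root_vec i' k0) *\<^sub>R root_vec i' k0) $ i
                 = (\<Sum>i'\<in>I. if i' = i then u (root_vec i' k0) else 0)"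
      using assms i by (intro trans[OF sum_component] sum.cong) (auto simp: root_vec_nth)
    ultimately show False using i v by simp
  qed
qed

lemma dim_zero_sum_space:
  assumes "K \<noteq> {}"
  shows "dim (zero_sum_space K) = card K - 1"
proof (cases "card K \<le> 1")
  case True
  then show ?thesis using assms by (simp add: zero_sum_space_card_le_1 le_Suc_eq card_eq_0_iff)
next
  case False
  obtain k0 where k0: "k0 \<in> K" using assms by auto
  let ?I = "K - {k0}"
  have "?I \<noteq> {}" using False k0 by (auto simp: card_le_Suc0_iff_eq)
  have "roots_between ?I {k0} = (\<lambda>i. root_vec i k0) ` ?I" by (auto simp: roots_between_def)
  moreover have "zero_sum_space K = span (roots_between ?I {k0})"
    using span_roots_between[of ?I "{k0}"] \<open>?I \<noteq> {}\<close> k0 by (simp add: insert_absorb)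
  ultimately have "dim (zero_sum_space K) = card ((\<lambda>i. root_vec i k0) ` ?I)"
    using independent_roots_to[of k0 ?I] by (simp add: dim_eq_card_independent)
  also have "\<dots> = card K - 1" using independent_roots_to(1)[of k0 ?I] k0 by (simp add: card_image)
  finally show ?thesis .
qed

subsection \<open>Faces of the root polytope\<close>

lemma convex_hull_Int_supporting_hyperplane:
  fixes S :: "'a::euclidean_space set"
  assumes fin: "finite S" and le: "\<And>s. s \<in> S \<Longrightarrow> a \<bullet> s \<le> b"
  shows "convex hull S \<inter> {x. a \<bullet> x = b} = convex hull (S \<inter> {x. a \<bullet> x = b})"
proof
  have "convex hull (S \<inter> {x. a \<bullet> x = b}) \<subseteq> {x. a \<bullet> x = b}"
    by (rule hull_minimal) (auto simp: convex_hyperplane)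
  then show "convex hull (S \<inter> {x. a \<bullet> x = b}) \<subseteq> convex hull S \<inter> {x. a \<bullet> x = b}"
    by (meson Int_lower1 hull_mono le_inf_iff)
  show "convex hull S \<inter> {x. a \<bullet> x = b} \<subseteq> convex hull (S \<inter> {x. a \<bullet> x = b})"
  proof
    fix x assume "x \<in> convex hull S \<inter> {x. a \<bullet> x = b}"
    then obtain u where u0: "\<forall>s\<in>S. 0 \<le> u s" and u1: "sum u S = 1"
      and ux: "(\<Sum>s\<in>S. u s *\<^sub>R s) = x" and ax: "a \<bullet> x = b"
      unfolding convex_hull_finite[OF fin] by blast
    \<comment> \<open>a convex combination attains the maximum \<open>b\<close> only if it puts no weight off the hyperplane\<close>
    have "a \<bullet> x = (\<Sum>s\<in>S. u s * (a \<bullet> s))"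
      unfolding ux[symmetric] by (simp add: inner_sum_right)
    moreover have "b = (\<Sum>s\<in>S. u s * b)" using u1 by (simp add: sum_distrib_right[symmetric])
    ultimately have "(\<Sum>s\<in>S. u s * (b - a \<bullet> s)) = 0"
      using ax by (simp add: right_diff_distrib sum_subtractf)
    moreover have nonneg: "\<And>s. s \<in> S \<Longrightarrow> 0 \<le> u s * (b - a \<bullet> s)"
      using u0 le by (auto intro!: mult_nonneg_nonneg)
    ultimately have "\<forall>s\<in>S. u s * (b - a \<bullet> s) = 0"
      using sum_nonneg_eq_0_iff[OF fin nonneg] by simp
    then have off: "\<forall>s\<in>S - (S \<inter> {x. a \<bullet> x = b}). u s = 0" by auto
    have "sum u (S \<inter> {x. a \<bullet> x = b}) = sum u S"
      by (rule sum.mono_neutral_left[OF fin]) (use off in auto)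
    moreover have "(\<Sum>s\<in>S \<inter> {x. a \<bullet> x = b}. u s *\<^sub>R s) = (\<Sum>s\<in>S. u s *\<^sub>R s)"
      by (rule sum.mono_neutral_left[OF fin]) (use off in auto)
    moreover have "finite (S \<inter> {x. a \<bullet> x = b})" using fin by simp
    ultimately show "x \<in> convex hull (S \<inter> {x. a \<bullet> x = b})"
      using u0 u1 ux convex_hull_finite[of "S \<inter> {x. a \<bullet> x = b}"] by auto
  qed
qed

lemma span_convex_hull: "span (convex hull S) = span S"
proof
  show "span (convex hull S) \<subseteq> span S"
    by (intro span_minimal hull_minimal span_superset subspace_imp_convex) simp_all
  show "span S \<subseteq> span (convex hull S)" by (rule span_mono[OF hull_subset])
qed

lemma rootsA_eq: "rootsA = {root_vec i j | i j. i \<noteq> j}"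
  by (simp add: rootsA_def root_vec_def)

lemma finite_rootsA: "finite (rootsA :: (real^'n::finite) set)"
proof -
  have "(rootsA :: (real^'n) set) \<subseteq> (\<lambda>(i,j). root_vec i j) ` UNIV" by (auto simp: rootsA_eq)
  then show ?thesis by (rule finite_subset) simp
qed

definition disjoint_pairs :: "('n::finite set \<times> 'n set) set" where
  "disjoint_pairs = {(I,J). I \<inter> J = {} \<and> I \<noteq> {} \<and> J \<noteq> {}}"

lemma finite_disjoint_pairs: "finite (disjoint_pairs :: ('n::finite set \<times> 'n set) set)"
  by (rule finite_subset[OF subset_UNIV]) simp

definition split_functional :: "'n::finite set \<Rightarrow> 'n set \<Rightarrow> real^'n" where
  "split_functional I J = (\<chi> k. if k \<in> I then 1 else if k \<in> J then -1 else 0)"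

lemma split_functional_le_2_on_polytopeA:
  assumes "I \<inter> J = {}" "x \<in> polytopeA"
  shows "split_functional I J \<bullet> x \<le> 2"
proof -
  have "rootsA \<subseteq> {x. split_functional I J \<bullet> x \<le> 2}"
    using assms(1) by (auto simp: rootsA_eq inner_root_vec split_functional_def)
  then have "polytopeA \<subseteq> {x. split_functional I J \<bullet> x \<le> 2}"
    unfolding polytopeA_def by (rule hull_minimal) (simp add: convex_halfspace_le)
  then show ?thesis using assms(2) by auto
qed

lemma rootsA_Int_split_hyperplane:
  "I \<inter> J = {} \<Longrightarrow> rootsA \<inter> {x. split_functional I J \<bullet> x = 2} = roots_between I J"
  by (auto simp: rootsA_eq inner_root_vec split_functional_def roots_between_def split: if_splits)
    (metis disjoint_iff)

lemma convex_hull_roots_between_eq: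
  assumes "I \<inter> J = {}"
  shows "convex hull (roots_between I J) = polytopeA \<inter> {x. split_functional I J \<bullet> x = 2}"
  using convex_hull_Int_supporting_hyperplane[OF finite_rootsA, of "split_functional I J" 2]
    split_functional_le_2_on_polytopeA[OF assms] rootsA_Int_split_hyperplane[OF assms]
  by (simp add: polytopeA_def hull_inc)

lemma convex_hull_roots_between_proper_face:
  assumes "(I,J) \<in> disjoint_pairs"
  shows "convex hull (roots_between I J) face_of polytopeA"
    and "convex hull (roots_between I J) \<noteq> {}"
    and "convex hull (roots_between I J) \<noteq> polytopeA"
proof -
  have d: "I \<inter> J = {}" using assms by (simp add: disjoint_pairs_def)
  show "convex hull (roots_between I J) face_of polytopeA"
    unfolding convex_hull_roots_between_eq[OF d]
    by (rule face_of_Int_supporting_hyperplane_le)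
      (auto simp: polytopeA_def split_functional_le_2_on_polytopeA[OF d])
  obtain i j where ij: "i \<in> I" "j \<in> J" using assms by (auto simp: disjoint_pairs_def)
  then show "convex hull (roots_between I J) \<noteq> {}" by (auto simp: roots_between_def)
  have "root_vec j i \<in> polytopeA"
    using ij d by (auto simp: polytopeA_def rootsA_eq intro!: hull_inc) (metis disjoint_iff)
  moreover have "split_functional I J \<bullet> root_vec j i \<noteq> 2"
    using ij d by (auto simp: inner_root_vec split_functional_def)
  ultimately show "convex hull (roots_between I J) \<noteq> polytopeA"
    unfolding convex_hull_roots_between_eq[OF d] by auto
qed

lemma inj_on_convex_hull_roots_between:
  "inj_on (\<lambda>(I,J). convex hull (roots_between I J)) disjoint_pairs"
proof -
  \<comment> \<open>the roots lying in the face determine \<open>(I, J)\<close>\<close>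
  have roots: "rootsA \<inter> convex hull (roots_between I J) = roots_between I J"
    if "(I,J) \<in> disjoint_pairs" for I J
  proof -
    have d: "I \<inter> J = {}" using that by (simp add: disjoint_pairs_def)
    have "rootsA \<subseteq> polytopeA" by (simp add: polytopeA_def hull_subset)
    then show ?thesis
      using rootsA_Int_split_hyperplane[OF d] by (auto simp: convex_hull_roots_between_eq[OF d])
  qed
  have sides: "A \<subseteq> A' \<and> B \<subseteq> B'"
    if "(A,B) \<in> disjoint_pairs" "(A',B') \<in> disjoint_pairs"
      "roots_between A B = roots_between A' B'" for A B A' B'
  proof -
    have "i \<in> A' \<and> j \<in> B'" if "i \<in> A" "j \<in> B" for i j
    proof -
      have "root_vec i j \<in> roots_between A B"
        using \<open>i \<in> A\<close> \<open>j \<in> B\<close> by (auto simp: roots_between_def)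
      then have "root_vec i j \<in> roots_between A' B'"
        using \<open>roots_between A B = roots_between A' B'\<close> by simp
      then obtain i' j' where "i' \<in> A'" "j' \<in> B'" "root_vec i j = root_vec i' j'"
        by (auto simp: roots_between_def)
      moreover have "i \<noteq> j" "i' \<noteq> j'"
        using that calculation \<open>(A,B) \<in> disjoint_pairs\<close> \<open>(A',B') \<in> disjoint_pairs\<close>
        by (auto simp: disjoint_pairs_def)
      ultimately show ?thesis by (simp add: root_vec_eq_iff)
    qed
    then show ?thesis using \<open>(A,B) \<in> disjoint_pairs\<close> by (auto simp: disjoint_pairs_def)
  qed
  show ?thesis
  proof (rule inj_onI, clarify)
    fix I J I' J' assume a: "(I,J) \<in> disjoint_pairs" "(I',J') \<in> disjoint_pairs"
      "convex hull (roots_between I J) = convex hull (roots_between I' J')"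
    then have "roots_between I J = roots_between I' J'" using roots by metis
    then show "I = I' \<and> J = J'" using sides[OF a(1,2)] sides[OF a(2,1)] by auto
  qed
qed

lemma rootsA_Int_supporting_hyperplane:
  assumes le: "\<And>s. s \<in> rootsA \<Longrightarrow> a \<bullet> s \<le> b"
    and ne: "rootsA \<inter> {x. a \<bullet> x = b} \<noteq> {}" and proper: "rootsA \<inter> {x. a \<bullet> x = b} \<noteq> rootsA"
  obtains I J where "(I,J) \<in> disjoint_pairs" "rootsA \<inter> {x. a \<bullet> x = b} = roots_between I J"
proof -
  define hi where "hi = Max (range (\<lambda>k. a$k))"
  define lo where "lo = Min (range (\<lambda>k. a$k))"
  have hi: "\<And>k. a$k \<le> hi" and lo: "\<And>k. lo \<le> a$k"
    unfolding hi_def lo_def by (auto intro: Max_ge Min_le)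
  have "hi \<in> range (\<lambda>k. a$k)" "lo \<in> range (\<lambda>k. a$k)"
    unfolding hi_def lo_def by (auto intro: Max_in Min_in)
  then obtain ihi jlo where ihi: "a$ihi = hi" and jlo: "a$jlo = lo" by auto
  obtain x where "x \<in> rootsA" "a \<bullet> x = b" using ne by auto
  then obtain i0 j0 where ij0: "i0 \<noteq> j0" "a$i0 - a$j0 = b"
    by (auto simp: rootsA_eq inner_root_vec)
  have "lo < hi"
  proof (rule ccontr)
    assume "\<not> lo < hi"
    then have "\<And>k. a$k = hi" using hi lo by (meson antisym order.trans not_le)
    then have "rootsA \<inter> {x. a \<bullet> x = b} = rootsA"
      using ij0 by (auto simp: rootsA_eq inner_root_vec)
    then show False using proper by simp
  qed
  then have "a$ihi - a$jlo \<le> b" using le[of "root_vec ihi jlo"] ihi jlo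
    by (auto simp: rootsA_eq inner_root_vec)
  then have b: "b = hi - lo" using ij0 hi[of i0] lo[of j0] ihi jlo by simp
  define I where "I = {k. a$k = hi}"
  define J where "J = {k. a$k = lo}"
  have "(I,J) \<in> disjoint_pairs"
    using ihi jlo \<open>lo < hi\<close> by (auto simp: disjoint_pairs_def I_def J_def)
  moreover have "rootsA \<inter> {x. a \<bullet> x = b} = roots_between I J"
  proof
    show "rootsA \<inter> {x. a \<bullet> x = b} \<subseteq> roots_between I J"
    proof
      fix x assume "x \<in> rootsA \<inter> {x. a \<bullet> x = b}"
      then obtain i j where "x = root_vec i j" "a$i - a$j = b" by (auto simp: rootsA_eq inner_root_vec)
      moreover have "a$i = hi" "a$j = lo" using calculation b hi[of i] lo[of j] by linarith+
      ultimately show "x \<in> roots_between I J" by (auto simp: roots_between_def I_def J_def)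
    qed
    show "roots_between I J \<subseteq> rootsA \<inter> {x. a \<bullet> x = b}"
      using b \<open>lo < hi\<close> by (auto simp: roots_between_def rootsA_eq inner_root_vec I_def J_def)
  qed
  ultimately show ?thesis by (rule that)
qed

lemma proper_face_of_polytopeA:
  assumes "F face_of polytopeA" "F \<noteq> {}" "F \<noteq> polytopeA"
  obtains I J where "(I,J) \<in> disjoint_pairs" "F = convex hull (roots_between I J)"
proof -
  have "polyhedron polytopeA" by (simp add: polytopeA_def polyhedron_convex_hull finite_rootsA)
  then have "F exposed_face_of polytopeA"
    using exposed_face_of_polyhedron assms(1) by blast
  then obtain a b where ab: "polytopeA \<subseteq> {x. a \<bullet> x \<le> b}" "F = polytopeA \<inter> {x. a \<bullet> x = b}"
    by (auto simp: exposed_face_of_def)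
  have le: "\<And>s. s \<in> rootsA \<Longrightarrow> a \<bullet> s \<le> b"
    using ab(1) hull_subset[of rootsA convex] by (auto simp: polytopeA_def)
  have F: "F = convex hull (rootsA \<inter> {x. a \<bullet> x = b})"
    using ab(2) convex_hull_Int_supporting_hyperplane[OF finite_rootsA le] by (simp add: polytopeA_def)
  have "rootsA \<inter> {x. a \<bullet> x = b} \<noteq> {}" "rootsA \<inter> {x. a \<bullet> x = b} \<noteq> rootsA"
    using F assms(2,3) by (auto simp: polytopeA_def)
  with le obtain I J where "(I,J) \<in> disjoint_pairs" "rootsA \<inter> {x. a \<bullet> x = b} = roots_between I J"
    by (rule rootsA_Int_supporting_hyperplane)
  then show ?thesis using F that by simp
qed

lemma aff_dim_convex_hull_roots_between:
  assumes "(I,J) \<in> disjoint_pairs"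
  shows "aff_dim (convex hull (roots_between I J)) = int (card I + card J) - 2"
proof -
  have d: "I \<inter> J = {}" "I \<noteq> {}" "J \<noteq> {}" using assms by (auto simp: disjoint_pairs_def)
  \<comment> \<open>the roots lie on an affine hyperplane missing the origin, so their affine dimension is one
    less than the dimension of their span\<close>
  have "roots_between I J \<subseteq> {x. split_functional I J \<bullet> x = 2}"
    using rootsA_Int_split_hyperplane[OF d(1)] by blast
  then have "affine hull (roots_between I J) \<subseteq> {x. split_functional I J \<bullet> x = 2}"
    by (rule hull_minimal) (simp add: affine_hyperplane)
  then have "0 \<notin> affine hull (roots_between I J)" by auto
  then have "aff_dim (roots_between I J) + 1 = aff_dim (insert 0 (roots_between I J))"
    by (simp add: aff_dim_insert)
  also have "\<dots> = int (dim (insert 0 (roots_between I J)))"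
    by (rule aff_dim_zero) (simp add: hull_inc)
  also have "dim (insert 0 (roots_between I J)) = card (I \<union> J) - 1"
    by (metis dim_span span_insert_0 span_roots_between[OF d] dim_zero_sum_space Un_empty d(2))
  also have "card (I \<union> J) = card I + card J" using d(1) by (simp add: card_Un_disjoint)
  finally have "aff_dim (roots_between I J) + 1 = int (card I + card J - 1)" .
  moreover have "1 \<le> card I" "1 \<le> card J" using d by (auto simp: Suc_le_eq card_gt_0_iff)
  ultimately show ?thesis by (simp add: aff_dim_convex_hull)
qed

lemma proper_faces_polytopeA:
  "{F. F face_of polytopeA \<and> F \<noteq> {} \<and> F \<noteq> polytopeA}
     = (\<lambda>(I,J). convex hull (roots_between I J)) ` disjoint_pairs"
proof
  show "{F. F face_of polytopeA \<and> F \<noteq> {} \<and> F \<noteq> polytopeA}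
    \<subseteq> (\<lambda>(I,J). convex hull (roots_between I J)) ` disjoint_pairs"
    by (force elim!: proper_face_of_polytopeA)
  show "(\<lambda>(I,J). convex hull (roots_between I J)) ` disjoint_pairs
    \<subseteq> {F. F face_of polytopeA \<and> F \<noteq> {} \<and> F \<noteq> polytopeA}"
    by (auto dest: convex_hull_roots_between_proper_face)
qed

lemma face_poly_polytopeA_eq_sum:
  "face_poly_polytope (polytopeA :: (real^'n::finite) set)
     = (\<Sum>(I,J)\<in>(disjoint_pairs :: ('n set \<times> 'n set) set). monom 1 (card I + card J - 2))"
proof -
  have nat_eq: "\<And>x y::nat. nat (int x + int y - 2) = x + y - 2" by arith
  show ?thesis
    unfolding face_poly_polytope_def proper_faces_polytopeA
    by (subst sum.reindex[OF inj_on_convex_hull_roots_between])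
      (auto intro!: sum.cong simp: aff_dim_convex_hull_roots_between nat_eq)
qed

subsection \<open>The arrangement and its regions\<close>

lemma obtain_other_index:
  fixes i :: "'n::finite"
  assumes "2 \<le> CARD('n)"
  obtains j :: 'n where "j \<noteq> i"
proof -
  obtain a b :: 'n where "a \<noteq> b" using assms card_le_Suc0_iff_eq[of "UNIV :: 'n set"] by auto
  then show ?thesis using that by metis
qed

lemma EA_eq_zero_sum_space: "EA = zero_sum_space UNIV"
proof
  show "EA \<subseteq> zero_sum_space UNIV"
    unfolding EA_def
    by (rule span_minimal[OF _ subspace_zero_sum_space])
      (auto simp: rootsA_eq intro: root_vec_in_zero_sum_space)
  show "zero_sum_space UNIV \<subseteq> (EA :: (real^'n) set)"
  proof (cases "CARD('n) \<le> 1")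
    case True
    then show ?thesis by (simp add: zero_sum_space_card_le_1 EA_def span_zero)
  next
    case False
    fix i0 :: 'n
    have "2 \<le> CARD('n)" using False by simp
    then obtain j0 where "j0 \<noteq> i0" using obtain_other_index by metis
    then have "UNIV - {i0} \<noteq> {}" by auto
    then have "zero_sum_space UNIV = span (roots_between {i0} (UNIV - {i0}))"
      using span_roots_between[of "{i0}" "UNIV - {i0}"] by (simp add: insert_absorb)
    also have "\<dots> \<subseteq> span rootsA"
      by (rule span_mono) (auto simp: roots_between_def rootsA_eq)
    finally show ?thesis by (simp add: EA_def)
  qed
qed

lemma aff_dim_polytopeA:
  assumes "2 \<le> CARD('n::finite)"
  shows "aff_dim (polytopeA :: (real^'n) set) = int CARD('n) - 1"
proof -
  obtain i j :: 'n where ij: "j \<noteq> i" using obtain_other_index[OF assms] by metis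
  then have "root_vec i j \<in> polytopeA" "root_vec j i \<in> polytopeA"
    unfolding polytopeA_def rootsA_eq by (auto intro: hull_inc)
  then have "(1/2) *\<^sub>R root_vec i j + (1/2) *\<^sub>R root_vec j i \<in> polytopeA"
    unfolding polytopeA_def by (intro convexD[OF convex_convex_hull]) auto
  then have "(0 :: real^'n) \<in> polytopeA" by (simp add: root_vec_def algebra_simps)
  then have "(0 :: real^'n) \<in> affine hull polytopeA" by (rule hull_inc)
  then have "aff_dim (polytopeA :: (real^'n) set) = int (dim (span (polytopeA :: (real^'n) set)))"
    by (simp add: aff_dim_zero)
  also have "span polytopeA = zero_sum_space (UNIV :: 'n set)"
    using EA_eq_zero_sum_space by (simp add: polytopeA_def span_convex_hull EA_def)
  finally show ?thesis using assms by (simp add: dim_zero_sum_space)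
qed

lemma arrA_subset_coordinate_hyperplanes:
  assumes N3: "3 \<le> CARD('n::finite)" and X: "X \<in> (arrA :: (real^'n) set set)"
  obtains m where "X = zero_sum_space (- {m})"
proof -
  have N: "2 \<le> CARD('n)" using N3 by simp
  obtain F where F: "X = span F" "F face_of polytopeA" "aff_dim F = int CARD('n) - 3"
    using X by (auto simp: arrA_def)
  have "F \<noteq> {}" "F \<noteq> polytopeA" using F(3) N3 aff_dim_polytopeA[OF N] by auto
  with F(2) obtain I J where IJ: "(I,J) \<in> disjoint_pairs" "F = convex hull (roots_between I J)"
    by (rule proper_face_of_polytopeA)
  have d: "I \<inter> J = {}" "I \<noteq> {}" "J \<noteq> {}" using IJ by (auto simp: disjoint_pairs_def)
  have "card (I \<union> J) = CARD('n) - 1"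
    using F(3) IJ aff_dim_convex_hull_roots_between[OF IJ(1)] d(1) by (simp add: card_Un_disjoint)
  then have "card (- (I \<union> J)) = 1" using N by (simp add: Compl_eq_Diff_UNIV card_Diff_subset)
  then obtain m where "- (I \<union> J) = {m}" by (rule card_1_singletonE)
  then have "I \<union> J = - {m}" by (metis double_complement)
  then have "X = zero_sum_space (- {m})"
    using F(1) IJ(2) span_roots_between[OF d] by (simp add: span_convex_hull)
  then show ?thesis by (rule that)
qed

lemma coordinate_hyperplane_in_arrA:
  assumes N3: "3 \<le> CARD('n::finite)"
  shows "zero_sum_space (- {m :: 'n}) \<in> arrA"
proof -
  have "2 \<le> CARD('n)" using N3 by simp
  then obtain i where i: "i \<noteq> m" using obtain_other_index by metis
  let ?I = "{i}" and ?J = "- {i, m}"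
  have cJ: "card ?J = CARD('n) - 2" using i by (simp add: Compl_eq_Diff_UNIV card_Diff_subset)
  then have IJ: "(?I, ?J) \<in> disjoint_pairs" using N3 by (auto simp: disjoint_pairs_def)
  have "aff_dim (convex hull (roots_between ?I ?J)) = int CARD('n) - 3"
    using aff_dim_convex_hull_roots_between[OF IJ] cJ N3 by simp
  moreover have "span (convex hull (roots_between ?I ?J)) = zero_sum_space (- {m})"
    using span_roots_between[of ?I ?J] IJ i
    by (auto simp: span_convex_hull disjoint_pairs_def intro!: arg_cong[where f = zero_sum_space])
  ultimately show ?thesis
    using convex_hull_roots_between_proper_face(1)[OF IJ] unfolding arrA_def by blast
qed

lemma arrA_eq:
  assumes N: "2 \<le> CARD('n::finite)"
  shows "(arrA :: (real^'n) set set) = range (\<lambda>m. zero_sum_space (- {m}))"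
proof (cases "CARD('n) = 2")
  case True
  \<comment> \<open>for \<open>n = 1\<close> the only face of dimension \<open>-1\<close> is \<open>{}\<close>, and both sides are \<open>{{0}}\<close>\<close>
  then have "F face_of (polytopeA :: (real^'n) set) \<and> aff_dim F = int CARD('n) - 3 \<longleftrightarrow> F = {}" for F
    by (auto simp: aff_dim_empty[symmetric] empty_face_of)
  then have "(arrA :: (real^'n) set set) = {span {}}" unfolding arrA_def by auto
  moreover have "card (- {m :: 'n}) \<le> 1" for m using True by (simp add: Compl_eq_Diff_UNIV card_Diff_subset)
  ultimately show ?thesis by (auto simp: zero_sum_space_card_le_1)
next
  case False
  then have N3: "3 \<le> CARD('n)" using N by simp
  show ?thesis
  proof
    show "(arrA :: (real^'n) set set) \<subseteq> range (\<lambda>m. zero_sum_space (- {m}))"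
      by (auto elim!: arrA_subset_coordinate_hyperplanes[OF N3])
    show "range (\<lambda>m. zero_sum_space (- {m})) \<subseteq> (arrA :: (real^'n) set set)"
      using coordinate_hyperplane_in_arrA[OF N3] by blast
  qed
qed

definition nonzero_coords :: "(real^'n::finite) set" where
  "nonzero_coords = {x \<in> zero_sum_space UNIV. \<forall>m. x$m \<noteq> 0}"

lemma EA_minus_arrA:
  "2 \<le> CARD('n::finite) \<Longrightarrow> (EA :: (real^'n) set) - \<Union>arrA = nonzero_coords"
  unfolding EA_eq_zero_sum_space arrA_eq nonzero_coords_def by (auto simp: zero_sum_space_def)

definition sign_in :: "'n set \<Rightarrow> 'n \<Rightarrow> real" where
  "sign_in P m = (if m \<in> P then 1 else -1)"

definition chamber :: "'n::finite set \<Rightarrow> (real^'n) set" where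
  "chamber P = {x \<in> zero_sum_space UNIV. \<forall>m. 0 < sign_in P m * x$m}"

definition closed_chamber :: "'n::finite set \<Rightarrow> (real^'n) set" where
  "closed_chamber P = {x \<in> zero_sum_space UNIV. \<forall>m. 0 \<le> sign_in P m * x$m}"

lemma convex_chamber: "convex (chamber P)"
proof -
  have "chamber P = zero_sum_space UNIV \<inter> (\<Inter>m. {x. 0 < (sign_in P m *\<^sub>R axis m 1) \<bullet> x})"
    by (auto simp: chamber_def inner_axis')
  also have "convex \<dots>"
    by (intro convex_Int subspace_imp_convex[OF subspace_zero_sum_space] convex_INT ballI
        convex_halfspace_gt)
  finally show ?thesis .
qed

lemma closed_closed_chamber: "closed (closed_chamber P)"
proof -
  have "closed_chamber P = zero_sum_space UNIV \<inter> (\<Inter>m. {x. (sign_in P m *\<^sub>R axis m 1) \<bullet> x \<ge> 0})"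
    by (auto simp: closed_chamber_def inner_axis')
  also have "closed \<dots>"
    by (intro closed_Int closed_subspace[OF subspace_zero_sum_space] closed_INT ballI
        closed_halfspace_ge)
  finally show ?thesis .
qed

lemma chamber_subset_nonzero_coords: "chamber P \<subseteq> nonzero_coords"
  by (auto simp: chamber_def nonzero_coords_def) (metis mult_zero_right order_less_irrefl)

text \<open>A path inside \<open>nonzero_coords\<close> cannot change the sign of a coordinate.\<close>
lemma connected_component_nonzero_coords:
  assumes x: "x \<in> nonzero_coords"
  shows "connected_component_set nonzero_coords x = chamber {m. 0 < x$m}"
proof
  have "0 < sign_in {m. 0 < x$m} m * x$m" for m
  proof -
    have "x$m \<noteq> 0" using x by (simp add: nonzero_coords_def)
    then show ?thesis by (cases "0 < x$m") (simp_all add: sign_in_def)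
  qed
  then have "x \<in> chamber {m. 0 < x$m}"
    using x by (simp add: chamber_def nonzero_coords_def)
  then show "chamber {m. 0 < x$m} \<subseteq> connected_component_set nonzero_coords x"
    by (rule connected_component_maximal[OF _ convex_connected[OF convex_chamber]
          chamber_subset_nonzero_coords])
  show "connected_component_set nonzero_coords x \<subseteq> chamber {m. 0 < x$m}"
  proof
    fix y assume y: "y \<in> connected_component_set nonzero_coords x"
    let ?C = "connected_component_set nonzero_coords x"
    have C: "connected ?C" "?C \<subseteq> nonzero_coords" "x \<in> ?C"
      using x by (auto simp: connected_component_subset)
    have "0 < sign_in {m. 0 < x$m} m * y$m" for m
    proof (rule ccontr)
      assume sign_change: "\<not> 0 < sign_in {m. 0 < x$m} m * y$m"
      have "\<exists>z\<in>?C. z$m = 0"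
      proof (cases "0 < x$m")
        case True
        then show ?thesis
          using sign_change connected_ivt_component_cart[OF C(1) y C(3), of m 0]
          by (simp add: sign_in_def)
      next
        case False
        moreover have "x$m \<noteq> 0" using x by (simp add: nonzero_coords_def)
        ultimately have "x$m < 0" by simp
        then show ?thesis
          using sign_change connected_ivt_component_cart[OF C(1) C(3) y, of m 0] False
          by (simp add: sign_in_def)
      qed
      then show False using C(2) by (auto simp: nonzero_coords_def)
    qed
    then show "y \<in> chamber {m. 0 < x$m}"
      using y C(2) by (auto simp: chamber_def nonzero_coords_def)
  qed
qed

definition balanced_vec :: "'n::finite set \<Rightarrow> 'n set \<Rightarrow> real^'n" where
  "balanced_vec P M = (\<chi> m. if m \<in> P then real (card M) else if m \<in> M then - real (card P) else 0)"

lemma balanced_vec_in_zero_sum_space: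
  assumes "P \<inter> M = {}"
  shows "balanced_vec P M \<in> zero_sum_space (P \<union> M)"
proof -
  have "(\<Sum>k\<in>UNIV. balanced_vec P M $ k) = (\<Sum>k\<in>P \<union> M. balanced_vec P M $ k)"
    by (rule sum.mono_neutral_right) (auto simp: balanced_vec_def)
  also have "\<dots> = (\<Sum>k\<in>P. balanced_vec P M $ k) + (\<Sum>k\<in>M. balanced_vec P M $ k)"
    using assms by (simp add: sum.union_disjoint)
  also have "\<dots> = (\<Sum>k\<in>P. real (card M)) + (\<Sum>k\<in>M. - real (card P))"
    using assms by (intro arg_cong2[where f = "(+)"] sum.cong) (auto simp: balanced_vec_def)
  finally show ?thesis by (auto simp: zero_sum_space_def balanced_vec_def)
qed

lemma balanced_vec_pos: "m \<in> P \<Longrightarrow> M \<noteq> {} \<Longrightarrow> 0 < balanced_vec P M $ m"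
  by (simp add: balanced_vec_def card_gt_0_iff)

lemma balanced_vec_neg: "m \<in> M \<Longrightarrow> P \<inter> M = {} \<Longrightarrow> P \<noteq> {} \<Longrightarrow> balanced_vec P M $ m < 0"
  by (auto simp: balanced_vec_def card_gt_0_iff)

lemma balanced_vec_in_chamber:
  assumes "P \<noteq> {}" "P \<noteq> UNIV"
  shows "balanced_vec P (- P) \<in> chamber P"
  using assms balanced_vec_in_zero_sum_space[of P "- P"] balanced_vec_pos[of _ P "- P"]
    balanced_vec_neg[of _ "- P" P]
  by (auto simp: chamber_def sign_in_def)

lemma components_nonzero_coords:
  "components (nonzero_coords :: (real^'n::finite) set) = chamber ` {P. P \<noteq> {} \<and> P \<noteq> UNIV}"
proof (intro set_eqI iffI)
  fix R :: "(real^'n) set" assume "R \<in> components nonzero_coords"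
  then obtain x where x: "x \<in> nonzero_coords" "R = chamber {m. 0 < x$m}"
    by (auto simp: components_def connected_component_nonzero_coords)
  have sum0: "(\<Sum>m\<in>UNIV. x$m) = 0" and nz: "\<And>m. x$m \<noteq> 0"
    using x(1) by (auto simp: nonzero_coords_def zero_sum_space_def)
  \<comment> \<open>coordinates summing to zero cannot all have the same sign\<close>
  have "\<exists>m. 0 < x$m"
  proof (rule ccontr)
    assume "\<nexists>m. 0 < x$m"
    then have "0 < (\<Sum>m\<in>UNIV. - x$m)" using nz by (intro sum_pos) (auto simp: not_less le_less)
    with sum0 show False by (simp add: sum_negf)
  qed
  moreover have "\<exists>m. x$m < 0"
  proof (rule ccontr)
    assume "\<nexists>m. x$m < 0"
    then have "0 < (\<Sum>m\<in>UNIV. x$m)" using nz by (intro sum_pos) (auto simp: not_less le_less)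
    with sum0 show False by simp
  qed
  ultimately obtain p q where "0 < x$p" "x$q < 0" by blast
  then have "p \<in> {m. 0 < x$m}" "q \<notin> {m. 0 < x$m}" by auto
  then have "{m. 0 < x$m} \<noteq> {}" "{m. 0 < x$m} \<noteq> UNIV" by blast+
  then show "R \<in> chamber ` {P. P \<noteq> {} \<and> P \<noteq> UNIV}" using x by auto
next
  fix R :: "(real^'n) set" assume "R \<in> chamber ` {P. P \<noteq> {} \<and> P \<noteq> UNIV}"
  then obtain P where P: "P \<noteq> {}" "P \<noteq> UNIV" "R = chamber P" by auto
  let ?w = "balanced_vec P (- P)"
  have w: "?w \<in> nonzero_coords"
    using balanced_vec_in_chamber[OF P(1,2)] chamber_subset_nonzero_coords by blast
  have "{m. 0 < ?w $ m} = P"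
    using P balanced_vec_pos[of _ P "- P"] balanced_vec_neg[of _ "- P" P] by fastforce
  then show "R \<in> components nonzero_coords"
    using componentsI[OF w] connected_component_nonzero_coords[OF w] P(3) by simp
qed

lemma closure_chamber:
  assumes "P \<noteq> {}" "P \<noteq> UNIV"
  shows "closure (chamber P) = closed_chamber P"
proof
  show "closure (chamber P) \<subseteq> closed_chamber P"
    by (rule closure_minimal[OF _ closed_closed_chamber])
      (auto simp: chamber_def closed_chamber_def less_imp_le)
  show "closed_chamber P \<subseteq> closure (chamber P)"
  proof
    fix y assume y: "y \<in> closed_chamber P"
    define p where "p = balanced_vec P (- P)"
    have p: "p \<in> chamber P" unfolding p_def by (rule balanced_vec_in_chamber[OF assms])
    \<comment> \<open>\<open>y + p/(k+1)\<close> lies in the open chamber and tends to \<open>y\<close>\<close>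
    define f where "f k = y + inverse (real (Suc k)) *\<^sub>R p" for k
    have "f k \<in> chamber P" for k
    proof -
      have "f k \<in> zero_sum_space UNIV"
        using y p subspace_zero_sum_space unfolding f_def chamber_def closed_chamber_def
        by (auto intro: subspace_add subspace_mul)
      moreover have "0 < sign_in P m * f k $ m" for m
      proof -
        have "0 \<le> sign_in P m * y$m" using y by (simp add: closed_chamber_def)
        moreover have "0 < sign_in P m * p$m" using p by (simp add: chamber_def)
        moreover have "sign_in P m * f k $ m = sign_in P m * y$m + inverse (real (Suc k)) * (sign_in P m * p$m)"
          by (simp add: f_def algebra_simps)
        ultimately show ?thesis by (simp add: add_nonneg_pos)
      qed
      ultimately show ?thesis by (simp add: chamber_def)
    qed
    moreover have "f \<longlonglongrightarrow> y"
    proof -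
      have "(\<lambda>k. y + inverse (real (Suc k)) *\<^sub>R p) \<longlonglongrightarrow> y + 0 *\<^sub>R p"
        by (intro tendsto_intros LIMSEQ_inverse_real_of_nat)
      then show ?thesis unfolding f_def by simp
    qed
    ultimately show "y \<in> closure (chamber P)" unfolding closure_sequential by blast
  qed
qed

lemma arr_regions_EA:
  "2 \<le> CARD('n::finite) \<Longrightarrow>
     arr_regions (EA :: (real^'n) set) arrA = chamber ` {P. P \<noteq> {} \<and> P \<noteq> UNIV}"
  by (simp add: arr_regions_def EA_minus_arrA components_nonzero_coords)

lemma arr_lattice_EA:
  assumes N: "2 \<le> CARD('n::finite)"
  shows "arr_lattice (EA :: (real^'n) set) arrA = range zero_sum_space"
proof
  show "arr_lattice (EA :: (real^'n) set) arrA \<subseteq> range zero_sum_space"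
  proof
    fix X assume "X \<in> arr_lattice (EA :: (real^'n) set) arrA"
    then obtain A where A: "X = zero_sum_space UNIV \<inter> \<Inter>A" "A \<subseteq> range (\<lambda>m. zero_sum_space (- {m}))"
      unfolding arr_lattice_def EA_eq_zero_sum_space arrA_eq[OF N] by blast
    then have "A = (\<lambda>m. zero_sum_space (- {m})) ` {m. zero_sum_space (- {m}) \<in> A}" by auto
    then have "X = zero_sum_space (- {m. zero_sum_space (- {m}) \<in> A})"
      using A(1) zero_sum_space_Int_coordinate_hyperplanes by metis
    then show "X \<in> range zero_sum_space" by simp
  qed
  show "range zero_sum_space \<subseteq> arr_lattice (EA :: (real^'n) set) arrA"
  proof clarify
    fix K :: "'n set"
    let ?A = "(\<lambda>m. zero_sum_space (- {m})) ` (- K)"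
    have "zero_sum_space K = zero_sum_space UNIV \<inter> \<Inter>?A"
      using zero_sum_space_Int_coordinate_hyperplanes[of "- K"] by simp
    moreover have "?A \<subseteq> arrA" using arrA_eq[OF N] by auto
    moreover have "zero_sum_space K \<noteq> {}" using zero_in_zero_sum_space by auto
    ultimately show "zero_sum_space K \<in> arr_lattice (EA :: (real^'n) set) arrA"
      unfolding arr_lattice_def EA_eq_zero_sum_space by blast
  qed
qed

definition sign_cone :: "'n::finite set \<Rightarrow> 'n set \<Rightarrow> (real^'n) set" where
  "sign_cone P M = {x \<in> zero_sum_space (P \<union> M). (\<forall>m\<in>P. 0 \<le> x$m) \<and> (\<forall>m\<in>M. x$m \<le> 0)}"

lemma closed_chamber_Int_zero_sum_space:
  "closed_chamber P \<inter> zero_sum_space K = sign_cone (P \<inter> K) (K - P)"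
proof -
  have "(P \<inter> K) \<union> (K - P) = K" by auto
  then show ?thesis
    by (auto simp: sign_cone_def closed_chamber_def zero_sum_space_def sign_in_def)
qed

lemma sign_cone_trivial:
  assumes "P = {} \<or> M = {}"
  shows "sign_cone P M = {0}"
proof -
  \<comment> \<open>a vector with coordinates of one sign summing to zero vanishes\<close>
  have "x = 0" if x: "x \<in> sign_cone P M" for x
  proof -
    have off: "\<And>k. k \<notin> P \<union> M \<Longrightarrow> x$k = 0" and sum0: "(\<Sum>k\<in>UNIV. x$k) = 0"
      using x by (auto simp: sign_cone_def zero_sum_space_def)
    show ?thesis
    proof (cases "M = {}")
      case True
      have "\<And>k. 0 \<le> x$k" using x off True by (auto simp: sign_cone_def)
      then show ?thesis using sum0 sum_nonneg_eq_0_iff[of UNIV "\<lambda>k. x$k"] by (simp add: vec_eq_iff)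
    next
      case False
      then have "\<And>k. 0 \<le> - x$k" using x off assms by (auto simp: sign_cone_def)
      moreover have "(\<Sum>k\<in>UNIV. - x$k) = 0" using sum0 by (simp add: sum_negf)
      ultimately show ?thesis using sum_nonneg_eq_0_iff[of UNIV "\<lambda>k. - x$k"] by (simp add: vec_eq_iff)
    qed
  qed
  then show ?thesis by (auto simp: sign_cone_def zero_in_zero_sum_space)
qed

lemma balanced_vec_in_sign_cone:
  assumes "(P,M) \<in> disjoint_pairs"
  shows "balanced_vec P M \<in> sign_cone P M"
proof -
  have d: "P \<inter> M = {}" "P \<noteq> {}" "M \<noteq> {}" using assms by (auto simp: disjoint_pairs_def)
  show ?thesis
    using balanced_vec_in_zero_sum_space[OF d(1)] balanced_vec_pos[OF _ d(3)] balanced_vec_neg[OF _ d(1,2)]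
    by (auto simp: sign_cone_def less_imp_le)
qed

lemma aff_dim_sign_cone:
  assumes "(P,M) \<in> disjoint_pairs"
  shows "aff_dim (sign_cone P M) = int (card P + card M) - 1"
proof -
  have d: "P \<inter> M = {}" "P \<noteq> {}" "M \<noteq> {}" using assms by (auto simp: disjoint_pairs_def)
  have "span (sign_cone P M) = zero_sum_space (P \<union> M)"
  proof
    show "span (sign_cone P M) \<subseteq> zero_sum_space (P \<union> M)"
      by (rule span_minimal[OF _ subspace_zero_sum_space]) (auto simp: sign_cone_def)
    have "roots_between P M \<subseteq> sign_cone P M"
      using d(1) by (auto simp: roots_between_def sign_cone_def root_vec_nth
          intro!: root_vec_in_zero_sum_space)
    then show "zero_sum_space (P \<union> M) \<subseteq> span (sign_cone P M)"
      using span_roots_between[OF d] span_mono by blast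
  qed
  moreover have "(0 :: real^'a) \<in> affine hull (sign_cone P M)"
    by (intro hull_inc) (simp add: sign_cone_def zero_in_zero_sum_space)
  then have "aff_dim (sign_cone P M) = int (dim (span (sign_cone P M)))"
    by (simp add: aff_dim_zero)
  ultimately have "aff_dim (sign_cone P M) = int (card (P \<union> M) - 1)"
    using d(2) by (simp add: dim_zero_sum_space)
  then show ?thesis using d by (simp add: card_Un_disjoint card_gt_0_iff Suc_le_eq of_nat_diff)
qed

lemma inj_on_sign_cone: "inj_on (\<lambda>(P,M). sign_cone P M) disjoint_pairs"
proof -
  \<comment> \<open>the strict sign pattern of the balanced vector recovers \<open>(P, M)\<close> from the cone\<close>
  have sides: "A \<subseteq> A' \<and> B \<subseteq> B'"
    if "(A,B) \<in> disjoint_pairs" "sign_cone A B = sign_cone A' B'" for A B A' B'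
  proof -
    have d: "A \<inter> B = {}" "A \<noteq> {}" "B \<noteq> {}" using that(1) by (auto simp: disjoint_pairs_def)
    have w: "balanced_vec A B \<in> sign_cone A' B'"
      using balanced_vec_in_sign_cone[OF that(1)] that(2) by simp
    then have w_off: "\<And>m. m \<notin> A' \<Longrightarrow> m \<notin> B' \<Longrightarrow> balanced_vec A B $ m = 0"
      and w_A': "\<And>m. m \<in> A' \<Longrightarrow> 0 \<le> balanced_vec A B $ m"
      and w_B': "\<And>m. m \<in> B' \<Longrightarrow> balanced_vec A B $ m \<le> 0"
      by (auto simp: sign_cone_def zero_sum_space_def)
    have "m \<in> A'" if "m \<in> A" for m
      using balanced_vec_pos[OF that d(3)] w_off[of m] w_B'[of m] by force
    moreover have "m \<in> B'" if "m \<in> B" for m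
      using balanced_vec_neg[OF that d(1,2)] w_off[of m] w_A'[of m] by force
    ultimately show ?thesis by blast
  qed
  show ?thesis
  proof (rule inj_onI, clarify)
    fix P M P' M' assume "(P,M) \<in> disjoint_pairs" "(P',M') \<in> disjoint_pairs"
      "sign_cone P M = sign_cone P' M'"
    then show "P = P' \<and> M = M'" using sides by blast
  qed
qed

lemma sign_cone_neq_0:
  assumes "(P,M) \<in> disjoint_pairs"
  shows "sign_cone P M \<noteq> {0}"
proof
  assume "sign_cone P M = {0}"
  then have "balanced_vec P M = 0" using balanced_vec_in_sign_cone[OF assms] by simp
  moreover obtain m where "m \<in> P" "M \<noteq> {}" using assms by (auto simp: disjoint_pairs_def)
  ultimately show False using balanced_vec_pos[of m P M] by simp
qed

lemma arr_faces_EA_eq_cuts: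
  assumes N: "2 \<le> CARD('n::finite)"
  shows "arr_faces (EA :: (real^'n) set) arrA
      = {sign_cone (P \<inter> K) (K - P) | P K. P \<noteq> {} \<and> P \<noteq> UNIV}"
proof -
  have cut: "closure (chamber P) \<inter> zero_sum_space K = sign_cone (P \<inter> K) (K - P)"
    if "P \<noteq> {}" "P \<noteq> UNIV" for P K
    using closure_chamber[OF that] closed_chamber_Int_zero_sum_space by simp
  show ?thesis
  proof (intro set_eqI iffI)
    fix F assume "F \<in> arr_faces (EA :: (real^'n) set) arrA"
    then obtain P K where "P \<noteq> {}" "P \<noteq> UNIV" "F = closure (chamber P) \<inter> zero_sum_space K"
      unfolding arr_faces_def arr_regions_EA[OF N] arr_lattice_EA[OF N] by blast
    then show "F \<in> {sign_cone (P \<inter> K) (K - P) | P K. P \<noteq> {} \<and> P \<noteq> UNIV}"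
      using cut by blast
  next
    fix F :: "(real^'n) set"
    assume "F \<in> {sign_cone (P \<inter> K) (K - P) | P K. P \<noteq> {} \<and> P \<noteq> UNIV}"
    then obtain P K where PK: "P \<noteq> {}" "P \<noteq> UNIV" "F = sign_cone (P \<inter> K) (K - P)" by blast
    then have "F = closure (chamber P) \<inter> zero_sum_space K" using cut[OF PK(1,2)] by simp
    moreover have "0 \<in> F" using PK(3) by (simp add: sign_cone_def zero_in_zero_sum_space)
    ultimately show "F \<in> arr_faces (EA :: (real^'n) set) arrA"
      unfolding arr_faces_def arr_regions_EA[OF N] arr_lattice_EA[OF N] using PK(1,2) by blast
  qed
qed

lemma arr_faces_EA:
  assumes N: "2 \<le> CARD('n::finite)"
  shows "arr_faces (EA :: (real^'n) set) arrA = insert {0} ((\<lambda>(P,M). sign_cone P M) ` disjoint_pairs)"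
proof -
  note faces = arr_faces_EA_eq_cuts[OF N]
  show ?thesis
  proof
    show "arr_faces (EA :: (real^'n) set) arrA \<subseteq> insert {0} ((\<lambda>(P,M). sign_cone P M) ` disjoint_pairs)"
    proof
      fix F assume "F \<in> arr_faces (EA :: (real^'n) set) arrA"
      then obtain P K where F: "F = sign_cone (P \<inter> K) (K - P)" unfolding faces by blast
      show "F \<in> insert {0} ((\<lambda>(P,M). sign_cone P M) ` disjoint_pairs)"
      proof (cases "P \<inter> K = {} \<or> K - P = {}")
        case True
        then have "F = {0}" using F by (simp add: sign_cone_trivial)
        then show ?thesis by simp
      next
        case False
        then have "(P \<inter> K, K - P) \<in> disjoint_pairs" by (auto simp: disjoint_pairs_def)
        then show ?thesis using F by force
      qed
    qed
    fix i :: 'n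
    obtain j where "j \<noteq> i" using obtain_other_index[OF N] by metis
    then have "{i} \<noteq> UNIV" by auto
    then have "sign_cone ({i} \<inter> {}) ({} - {i}) \<in> arr_faces (EA :: (real^'n) set) arrA"
      unfolding faces by blast
    then have "{0} \<in> arr_faces (EA :: (real^'n) set) arrA" by (simp add: sign_cone_trivial)
    moreover have "sign_cone P M \<in> arr_faces (EA :: (real^'n) set) arrA"
      if "(P,M) \<in> disjoint_pairs" for P M
    proof -
      have "P \<inter> (P \<union> M) = P" "(P \<union> M) - P = M" "P \<noteq> {}" "P \<noteq> UNIV"
        using that by (auto simp: disjoint_pairs_def)
      then have "sign_cone P M = sign_cone (P \<inter> (P \<union> M)) ((P \<union> M) - P)" "P \<noteq> {}" "P \<noteq> UNIV"
        by simp_all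
      then show ?thesis unfolding faces by blast
    qed
    ultimately show "insert {0} ((\<lambda>(P,M). sign_cone P M) ` disjoint_pairs)
      \<subseteq> arr_faces (EA :: (real^'n) set) arrA"
      by auto
  qed
qed

lemma arr_face_poly_EA_eq_sum:
  assumes "2 \<le> CARD('n::finite)"
  shows "arr_face_poly (EA :: (real^'n) set) arrA
     = 1 + (\<Sum>(P,M)\<in>(disjoint_pairs :: ('n set \<times> 'n set) set). monom 1 (card P + card M - 1))"
proof -
  have nat_eq: "\<And>x y::nat. nat (int x + int y - 1) = x + y - 1" by arith
  have "{0} \<notin> (\<lambda>(P,M). sign_cone P M) ` (disjoint_pairs :: ('n set \<times> 'n set) set)"
    using sign_cone_neq_0 by auto
  then have "arr_face_poly (EA :: (real^'n) set) arrA
      = monom 1 (nat (aff_dim {0::real^'n}))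
        + (\<Sum>F\<in>(\<lambda>(P,M). sign_cone P M) ` (disjoint_pairs :: ('n set \<times> 'n set) set).
             monom 1 (nat (aff_dim F)))"
    unfolding arr_face_poly_def arr_faces_EA[OF assms]
    by (rule sum.insert[OF finite_imageI[OF finite_disjoint_pairs]])
  also have "(\<Sum>F\<in>(\<lambda>(P,M). sign_cone P M) ` (disjoint_pairs :: ('n set \<times> 'n set) set).
               monom 1 (nat (aff_dim F)))
      = (\<Sum>(P,M)\<in>(disjoint_pairs :: ('n set \<times> 'n set) set). monom 1 (card P + card M - 1))"
    by (subst sum.reindex[OF inj_on_sign_cone]) (auto intro!: sum.cong simp: aff_dim_sign_cone nat_eq)
  finally show ?thesis by (simp add: one_pCons monom_0)
qed

subsection \<open>Counting by cardinality\<close>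

lemma Collect_le_ge_eq_atLeastAtMost: "{k. k \<le> N \<and> m \<le> k} = {m..N :: nat}"
  by auto

lemma sum_subsets_by_card:
  fixes h :: "nat \<Rightarrow> 'b::comm_semiring_1"
  assumes S: "finite S"
  shows "(\<Sum>K | K \<subseteq> S \<and> P (card K). h (card K))
       = (\<Sum>k | k \<le> card S \<and> P k. of_nat (card S choose k) * h k)"
proof -
  have fin: "finite {K. K \<subseteq> S \<and> P (card K)}" by (rule finite_subset[of _ "Pow S"]) (auto simp: S)
  have "(\<Sum>K | K \<subseteq> S \<and> P (card K). h (card K))
      = (\<Sum>k | k \<le> card S \<and> P k. \<Sum>K | K \<in> {K. K \<subseteq> S \<and> P (card K)} \<and> card K = k. h (card K))"
    by (rule sum.group[symmetric, OF fin]) (auto simp: card_mono S)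
  also have "\<dots> = (\<Sum>k | k \<le> card S \<and> P k. of_nat (card S choose k) * h k)"
  proof (rule sum.cong[OF refl])
    fix k assume "k \<in> {k. k \<le> card S \<and> P k}"
    then have "{K. K \<in> {K. K \<subseteq> S \<and> P (card K)} \<and> card K = k} = {K. K \<subseteq> S \<and> card K = k}"
      by auto
    then show "(\<Sum>K | K \<in> {K. K \<subseteq> S \<and> P (card K)} \<and> card K = k. h (card K))
        = of_nat (card S choose k) * h k"
      using n_subsets[OF S, of k] by simp
  qed
  finally show ?thesis .
qed

lemma card_proper_nonempty_subsets:
  assumes "finite K" "K \<noteq> {}"
  shows "card {I. I \<subseteq> K \<and> I \<noteq> {} \<and> I \<noteq> K} = 2 ^ card K - 2"
proof -
  have "{I. I \<subseteq> K \<and> I \<noteq> {} \<and> I \<noteq> K} = Pow K - {{}, K}" by auto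
  then show ?thesis using assms by (simp add: card_Diff_subset card_Pow)
qed

lemma bij_betw_disjoint_pairs:
  "bij_betw (\<lambda>(K, I). (I, K - I))
     (SIGMA K:{K::'n::finite set. 2 \<le> card K}. {I. I \<subseteq> K \<and> I \<noteq> {} \<and> I \<noteq> K}) disjoint_pairs"
proof (rule bij_betw_imageI)
  show "inj_on (\<lambda>(K, I). (I, K - I))
      (SIGMA K:{K::'n set. 2 \<le> card K}. {I. I \<subseteq> K \<and> I \<noteq> {} \<and> I \<noteq> K})"
    by (rule inj_onI) auto
  show "(\<lambda>(K, I). (I, K - I)) ` (SIGMA K:{K::'n set. 2 \<le> card K}. {I. I \<subseteq> K \<and> I \<noteq> {} \<and> I \<noteq> K})
      = disjoint_pairs"
  proof
    show "(\<lambda>(K, I). (I, K - I)) ` (SIGMA K:{K::'n set. 2 \<le> card K}. {I. I \<subseteq> K \<and> I \<noteq> {} \<and> I \<noteq> K})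
        \<subseteq> disjoint_pairs"
      by (auto simp: disjoint_pairs_def)
    show "disjoint_pairs \<subseteq> (\<lambda>(K, I). (I, K - I)) `
        (SIGMA K:{K::'n set. 2 \<le> card K}. {I. I \<subseteq> K \<and> I \<noteq> {} \<and> I \<noteq> K})"
    proof clarify
      fix I J :: "'n set" assume "(I,J) \<in> disjoint_pairs"
      then have d: "I \<inter> J = {}" "I \<noteq> {}" "J \<noteq> {}" by (auto simp: disjoint_pairs_def)
      then have "card (I \<union> J) = card I + card J" "card I \<ge> 1" "card J \<ge> 1"
        by (auto simp: card_Un_disjoint Suc_le_eq card_gt_0_iff)
      then have "(I \<union> J, I) \<in> (SIGMA K:{K. 2 \<le> card K}. {I. I \<subseteq> K \<and> I \<noteq> {} \<and> I \<noteq> K})"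
        using d by auto
      moreover have "(I, J) = (I, (I \<union> J) - I)" using d(1) by auto
      ultimately show "(I,J) \<in> (\<lambda>(K, I). (I, K - I)) `
          (SIGMA K:{K. 2 \<le> card K}. {I. I \<subseteq> K \<and> I \<noteq> {} \<and> I \<noteq> K})"
        by (metis (no_types, lifting) case_prod_conv image_eqI)
    qed
  qed
qed

lemma sum_disjoint_pairs_by_card:
  fixes g :: "nat \<Rightarrow> 'b::comm_semiring_1"
  shows "(\<Sum>(I,J)\<in>(disjoint_pairs :: ('n::finite set \<times> 'n set) set). g (card I + card J))
       = (\<Sum>k=2..CARD('n). of_nat ((CARD('n) choose k) * (2 ^ k - 2)) * g k)"
proof -
  define Sg where "Sg = (SIGMA K:{K::'n set. 2 \<le> card K}. {I. I \<subseteq> K \<and> I \<noteq> {} \<and> I \<noteq> K})"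
  have "(\<Sum>(I,J)\<in>(disjoint_pairs :: ('n set \<times> 'n set) set). g (card I + card J))
      = (\<Sum>(K,I)\<in>Sg. g (card I + card (K - I)))"
    unfolding Sg_def
    by (rule sum.reindex_bij_betw[OF bij_betw_disjoint_pairs, symmetric, THEN trans])
      (simp add: case_prod_unfold)
  also have "\<dots> = (\<Sum>K :: 'n set | 2 \<le> card K. \<Sum>I | I \<subseteq> K \<and> I \<noteq> {} \<and> I \<noteq> K. g (card I + card (K - I)))"
    unfolding Sg_def by (rule sum.Sigma[symmetric]) auto
  also have "\<dots> = (\<Sum>K :: 'n set | 2 \<le> card K. of_nat (2 ^ card K - 2) * g (card K))"
  proof (rule sum.cong[OF refl])
    fix K :: "'n set" assume "K \<in> {K. 2 \<le> card K}"
    then have "K \<noteq> {}" by auto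
    have "card I + card (K - I) = card K" if "I \<subseteq> K" for I
      using that by (metis card_Diff_subset card_mono finite le_add_diff_inverse)
    then have "(\<Sum>I | I \<subseteq> K \<and> I \<noteq> {} \<and> I \<noteq> K. g (card I + card (K - I)))
        = (\<Sum>I | I \<subseteq> K \<and> I \<noteq> {} \<and> I \<noteq> K. g (card K))"
      by (intro sum.cong) auto
    also have "\<dots> = of_nat (2 ^ card K - 2) * g (card K)"
      using card_proper_nonempty_subsets[of K] \<open>K \<noteq> {}\<close> by simp
    finally show "(\<Sum>I | I \<subseteq> K \<and> I \<noteq> {} \<and> I \<noteq> K. g (card I + card (K - I)))
        = of_nat (2 ^ card K - 2) * g (card K)" .
  qed
  also have "\<dots> = (\<Sum>k=2..CARD('n). of_nat (CARD('n) choose k) * (of_nat (2 ^ k - 2) * g k))"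
    using sum_subsets_by_card[where S = "UNIV :: 'n set" and P = "\<lambda>k. 2 \<le> k"
        and h = "\<lambda>k. of_nat (2 ^ k - 2) * g k"]
    by (simp add: Collect_le_ge_eq_atLeastAtMost)
  finally show ?thesis by (simp add: mult.assoc)
qed

subsection \<open>The characteristic polynomial\<close>


lemma mobius_from_superset_eqI:
  fixes mu :: "'a set \<Rightarrow> int"
  assumes fin: "finite L"
    and sums: "\<And>y. y \<in> L \<Longrightarrow> y \<subseteq> b \<Longrightarrow>
      (\<Sum>z | z \<in> L \<and> z \<subseteq> b \<and> y \<subseteq> z. mu z) = (if y = b then 1 else 0)"
    and outside: "\<And>y. y \<notin> L \<or> \<not> y \<subseteq> b \<Longrightarrow> mu y = 0"
  shows "mobius_from L (\<lambda>x y. y \<subseteq> x) b = mu"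
  unfolding mobius_from_def
proof (rule the_equality)
  show "(\<forall>y\<in>L. y \<subseteq> b \<longrightarrow> (\<Sum>z | z \<in> L \<and> z \<subseteq> b \<and> y \<subseteq> z. mu z) = (if y = b then 1 else 0))
      \<and> (\<forall>y. y \<notin> L \<or> \<not> y \<subseteq> b \<longrightarrow> mu y = 0)"
    using sums outside by blast
  fix mu' :: "'a set \<Rightarrow> int"
  assume mu': "(\<forall>y\<in>L. y \<subseteq> b \<longrightarrow> (\<Sum>z | z \<in> L \<and> z \<subseteq> b \<and> y \<subseteq> z. mu' z) = (if y = b then 1 else 0))
      \<and> (\<forall>y. y \<notin> L \<or> \<not> y \<subseteq> b \<longrightarrow> mu' y = 0)"
  \<comment> \<open>downward induction in \<open>L\<close>, measured by the number of strictly larger elements\<close>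
  have "mu' y = mu y" if "card {z \<in> L. y \<subset> z} = m" for m y
    using that
  proof (induction m arbitrary: y rule: less_induct)
    case (less m)
    show ?case
    proof (cases "y \<in> L \<and> y \<subseteq> b")
      case False
      then show ?thesis using mu' outside by auto
    next
      case True
      define A where "A = {z \<in> L. z \<subseteq> b \<and> y \<subseteq> z}"
      have fA: "finite A" and yA: "y \<in> A" using fin True by (simp_all add: A_def)
      have "mu' z = mu z" if "z \<in> A - {y}" for z
      proof -
        have "{w \<in> L. z \<subset> w} \<subset> {w \<in> L. y \<subset> w}" using that by (auto simp: A_def)
        then have "card {w \<in> L. z \<subset> w} < m"
          using less.prems psubset_card_mono[of "{w \<in> L. y \<subset> w}"] fin by auto
        then show ?thesis using less.IH by blast
      qed
      then have "(\<Sum>z\<in>A - {y}. mu' z) = (\<Sum>z\<in>A - {y}. mu z)" by (rule sum.cong[OF refl])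
      moreover have "(\<Sum>z\<in>A. mu' z) = (\<Sum>z\<in>A. mu z)"
        using mu' sums[of y] True by (simp add: A_def)
      ultimately show ?thesis by (simp add: sum.remove[OF fA yA])
    qed
  qed
  then show "mu' = mu" by blast
qed

lemma sum_supersets_alternating:
  assumes "finite S" "U \<subseteq> S"
  shows "(\<Sum>T | T \<subseteq> S \<and> U \<subseteq> T. (-1::int) ^ (card S - card T)) = (if U = S then 1 else 0)"
proof (cases "U = S")
  case True
  then have "{T. T \<subseteq> S \<and> U \<subseteq> T} = {S}" by auto
  then show ?thesis using True by simp
next
  case False
  \<comment> \<open>between \<open>U \<subset> S\<close> there are as many even as odd sets\<close>
  have "(\<Sum>T | T \<subseteq> S \<and> U \<subseteq> T. (-1::int) ^ (card S - card T))
      = (-1) ^ card S * (\<Sum>T | T \<subseteq> S \<and> U \<subseteq> T. (-1) ^ card T)"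
    unfolding sum_distrib_left
  proof (rule sum.cong[OF refl])
    fix T assume "T \<in> {T. T \<subseteq> S \<and> U \<subseteq> T}"
    then have "card T \<le> card S" using assms(1) by (simp add: card_mono)
    then obtain d where "card S = card T + d" using le_iff_add by blast
    then show "(-1::int) ^ (card S - card T) = (-1) ^ card S * (-1) ^ card T"
      by (simp add: power_add mult.commute mult.left_commute)
  qed
  also have "(\<Sum>T | T \<subseteq> S \<and> U \<subseteq> T. (-1::int) ^ card T) = 0"
    using assms False card_subsupersets_even_odd[of S U]
    by (intro sum_alternating_cancels) (auto cong: conj_cong)
  finally show ?thesis using False by simp
qed

lemma sum_binomial_alternating_from_2:
  assumes "2 \<le> N"
  shows "(\<Sum>k=2..N. of_nat (N choose k) * (-1::int) ^ (N - k)) = (-1) ^ (N - 1) * (1 - int N)"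
proof -
  have total: "(\<Sum>k\<le>N. of_nat (N choose k) * (-1::int) ^ (N - k)) = 0"
    using binomial_ring[of "1::int" "-1" N] assms by (simp add: zero_power)
  have "{..N} = insert 0 (insert 1 {2..N})" using assms by auto
  then have "(\<Sum>k\<le>N. of_nat (N choose k) * (-1::int) ^ (N - k))
      = (-1) ^ N + (int N * (-1) ^ (N - 1) + (\<Sum>k=2..N. of_nat (N choose k) * (-1) ^ (N - k)))"
    by simp
  moreover have "(-1::int) ^ N = - ((-1) ^ (N - 1))"
    using assms by (metis Suc_diff_1 less_le_trans mult_minus1 pos2 power_Suc)
  ultimately show ?thesis using total by (simp add: algebra_simps)
qed

lemma zero_sum_space_subset_iff:
  assumes "2 \<le> card K"
  shows "zero_sum_space K \<subseteq> zero_sum_space K' \<longleftrightarrow> K \<subseteq> K'"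
proof
  assume sub: "zero_sum_space K \<subseteq> zero_sum_space K'"
  show "K \<subseteq> K'"
  proof
    fix k assume "k \<in> K"
    have "\<not> K \<subseteq> {k}" using assms card_mono[of "{k}" K] by auto
    then obtain k' where "k' \<in> K" "k' \<noteq> k" by auto
    then have "root_vec k k' \<in> zero_sum_space K'"
      using sub \<open>k \<in> K\<close> root_vec_in_zero_sum_space by blast
    moreover have "root_vec k k' $ k \<noteq> 0" using \<open>k' \<noteq> k\<close> by (simp add: root_vec_nth)
    ultimately show "k \<in> K'" by (auto simp: zero_sum_space_def)
  qed
qed (rule zero_sum_space_mono)

lemma zero_sum_space_neq_0:
  assumes "2 \<le> card K"
  shows "zero_sum_space K \<noteq> {0}"
proof
  assume "zero_sum_space K = {0}"
  then have "zero_sum_space K \<subseteq> zero_sum_space {}" by (simp add: zero_sum_space_card_le_1)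
  then show False using assms by (simp add: zero_sum_space_subset_iff)
qed

lemma inj_on_zero_sum_space: "inj_on zero_sum_space {K. 2 \<le> card K}"
proof (rule inj_onI)
  fix K K' assume "K \<in> {K. 2 \<le> card K}" "K' \<in> {K. 2 \<le> card K}" "zero_sum_space K = zero_sum_space K'"
  then show "K = K'" using zero_sum_space_subset_iff[of K K'] zero_sum_space_subset_iff[of K' K] by auto
qed

lemma range_zero_sum_space:
  "range zero_sum_space = insert {0} (zero_sum_space ` {K. 2 \<le> card K})"
proof
  show "range zero_sum_space \<subseteq> insert {0} (zero_sum_space ` {K. 2 \<le> card K})"
  proof
    fix X assume "X \<in> range zero_sum_space"
    then obtain K where "X = zero_sum_space K" by auto
    then show "X \<in> insert {0} (zero_sum_space ` {K. 2 \<le> card K})"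
      by (cases "2 \<le> card K") (simp_all add: zero_sum_space_card_le_1)
  qed
  have "{0} = zero_sum_space {}" by (simp add: zero_sum_space_card_le_1)
  then show "insert {0} (zero_sum_space ` {K. 2 \<le> card K}) \<subseteq> range zero_sum_space" by auto
qed

text \<open>Above \<open>{0}\<close> the lattice is Boolean in \<open>K\<close>, so there \<open>\<mu>\<close> is \<open>(-1)\<^sup>c\<^sup>o\<^sup>d\<^sup>i\<^sup>m\<close>; all sets
  \<open>K\<close> of size at most one collapse to the bottom \<open>{0}\<close>, whose value makes the total sum vanish.\<close>
definition mobius_A :: "(real^'n::finite) set \<Rightarrow> int" where
  "mobius_A X = (if X = {0} then (-1) ^ (CARD('n) - 1) * int (CARD('n) - 1)
     else if X \<in> range zero_sum_space then (-1) ^ (CARD('n) - 1 - dim X) else 0)"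

lemma mobius_A_zero_sum_space:
  assumes "2 \<le> card K"
  shows "mobius_A (zero_sum_space K :: (real^'n::finite) set) = (-1) ^ (CARD('n) - card K)"
proof -
  have "K \<noteq> {}" "zero_sum_space K \<noteq> {0}" using assms zero_sum_space_neq_0 by auto
  then show ?thesis using assms by (simp add: mobius_A_def dim_zero_sum_space)
qed

lemma mobius_A_sum_from_0:
  assumes "2 \<le> CARD('n::finite)"
  shows "(\<Sum>X\<in>range zero_sum_space. mobius_A (X :: (real^'n) set)) = 0"
proof -
  have "{0} \<notin> zero_sum_space ` {K :: 'n set. 2 \<le> card K}" using zero_sum_space_neq_0 by auto
  then have "(\<Sum>X\<in>range zero_sum_space. mobius_A (X :: (real^'n) set))
      = mobius_A ({0} :: (real^'n) set) + (\<Sum>K | 2 \<le> card K. mobius_A (zero_sum_space K :: (real^'n) set))"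
    by (simp add: range_zero_sum_space sum.reindex[OF inj_on_zero_sum_space])
  also have "(\<Sum>K | 2 \<le> card K. mobius_A (zero_sum_space K :: (real^'n) set))
      = (\<Sum>K :: 'n set | 2 \<le> card K. (-1) ^ (CARD('n) - card K))"
    by (rule sum.cong) (simp_all add: mobius_A_zero_sum_space)
  also have "\<dots> = (\<Sum>k=2..CARD('n). of_nat (CARD('n) choose k) * (-1) ^ (CARD('n) - k))"
    using sum_subsets_by_card[where S = "UNIV :: 'n set" and P = "\<lambda>k. 2 \<le> k"
        and h = "\<lambda>k. (-1::int) ^ (CARD('n) - k)"]
    by (simp add: Collect_le_ge_eq_atLeastAtMost)
  also have "\<dots> = (-1) ^ (CARD('n) - 1) * (1 - int CARD('n))"
    by (rule sum_binomial_alternating_from_2[OF assms])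
  finally show ?thesis using assms by (simp add: mobius_A_def of_nat_diff algebra_simps)
qed

lemma mobius_A_sum_interval:
  assumes "2 \<le> card K"
  shows "(\<Sum>X | X \<in> range zero_sum_space \<and> zero_sum_space K \<subseteq> X. mobius_A (X :: (real^'n::finite) set))
       = (if K = UNIV then 1 else 0)"
proof -
  have sub: "{K'. K \<subseteq> K'} \<subseteq> {K'. 2 \<le> card K'}"
  proof
    fix K' assume "K' \<in> {K'. K \<subseteq> K'}"
    then have "card K \<le> card K'" by (simp add: card_mono)
    then show "K' \<in> {K'. 2 \<le> card K'}" using assms by simp
  qed
  have "{X. X \<in> range zero_sum_space \<and> zero_sum_space K \<subseteq> X} = zero_sum_space ` {K'. K \<subseteq> K'}"
  proof
    show "{X. X \<in> range zero_sum_space \<and> zero_sum_space K \<subseteq> X} \<subseteq> zero_sum_space ` {K'. K \<subseteq> K'}"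
      using zero_sum_space_subset_iff[OF assms] by blast
    show "zero_sum_space ` {K'. K \<subseteq> K'} \<subseteq> {X. X \<in> range zero_sum_space \<and> zero_sum_space K \<subseteq> X}"
      using zero_sum_space_mono by blast
  qed
  then have "(\<Sum>X | X \<in> range zero_sum_space \<and> zero_sum_space K \<subseteq> X. mobius_A (X :: (real^'n) set))
      = (\<Sum>K' | K \<subseteq> K'. mobius_A (zero_sum_space K' :: (real^'n) set))"
    using sum.reindex[OF inj_on_subset[OF inj_on_zero_sum_space sub], of mobius_A] by simp
  also have "\<dots> = (\<Sum>K' | K' \<subseteq> UNIV \<and> K \<subseteq> K'. (-1) ^ (card (UNIV :: 'n set) - card K'))"
    using sub by (intro sum.cong) (auto simp: mobius_A_zero_sum_space)
  also have "\<dots> = (if K = UNIV then 1 else 0)"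
    by (rule sum_supersets_alternating) simp_all
  finally show ?thesis .
qed

lemma mobius_from_arr_lattice_EA:
  assumes N: "2 \<le> CARD('n::finite)"
  shows "mobius_from (arr_lattice (EA :: (real^'n) set) arrA) (\<lambda>x y. y \<subseteq> x) EA = mobius_A"
  unfolding arr_lattice_EA[OF N] unfolding EA_eq_zero_sum_space
proof (rule mobius_from_superset_eqI)
  have below_top: "X \<subseteq> zero_sum_space UNIV" if "X \<in> range zero_sum_space" for X :: "(real^'n) set"
    using that zero_sum_space_mono[of _ UNIV] by auto
  fix y :: "(real^'n) set" assume y: "y \<in> range zero_sum_space" "y \<subseteq> zero_sum_space UNIV"
  show "(\<Sum>z | z \<in> range zero_sum_space \<and> z \<subseteq> zero_sum_space UNIV \<and> y \<subseteq> z. mobius_A z)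
      = (if y = zero_sum_space UNIV then 1 else 0)"
  proof (cases "y = {0}")
    case True
    then have "{z. z \<in> range zero_sum_space \<and> z \<subseteq> zero_sum_space UNIV \<and> y \<subseteq> z} = range zero_sum_space"
      using below_top zero_in_zero_sum_space by auto
    moreover have "y \<noteq> zero_sum_space UNIV" using True zero_sum_space_neq_0[of UNIV] N by auto
    ultimately show ?thesis using mobius_A_sum_from_0[OF N] by simp
  next
    case False
    then obtain K where K: "y = zero_sum_space K" "2 \<le> card K"
      using y(1) by (auto simp: range_zero_sum_space)
    have "{z. z \<in> range zero_sum_space \<and> z \<subseteq> zero_sum_space UNIV \<and> y \<subseteq> z}
        = {z. z \<in> range zero_sum_space \<and> zero_sum_space K \<subseteq> z}"
      using below_top K(1) by auto
    moreover have "K = UNIV \<longleftrightarrow> y = zero_sum_space UNIV"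
      using K zero_sum_space_subset_iff[OF K(2), of UNIV] zero_sum_space_subset_iff[of UNIV K] N
      by auto
    ultimately show ?thesis using mobius_A_sum_interval[OF K(2)] by simp
  qed
next
  fix y :: "(real^'n) set" assume "y \<notin> range zero_sum_space \<or> \<not> y \<subseteq> zero_sum_space UNIV"
  then have "y \<notin> range zero_sum_space" using zero_sum_space_mono[of _ UNIV] by blast
  moreover have "{0} \<in> range (zero_sum_space :: 'n set \<Rightarrow> (real^'n) set)"
    by (simp add: range_zero_sum_space)
  ultimately show "mobius_A y = 0" by (auto simp: mobius_A_def)
qed simp

lemma arr_char_poly_EA_eq_sum:
  assumes N: "2 \<le> CARD('n::finite)"
  shows "arr_char_poly (EA :: (real^'n) set) arrA
    = monom ((-1) ^ (CARD('n) - 1) * int (CARD('n) - 1)) 0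
      + (\<Sum>k=2..CARD('n). of_nat (CARD('n) choose k) * monom ((-1) ^ (CARD('n) - k)) (k - 1))"
proof -
  let ?L = "zero_sum_space ` {K :: 'n set. 2 \<le> card K}"
  have "{0} \<notin> ?L" using zero_sum_space_neq_0 by auto
  then have "arr_char_poly (EA :: (real^'n) set) arrA
      = monom (mobius_A {0::real^'n}) (dim {0::real^'n}) + (\<Sum>X\<in>?L. monom (mobius_A X) (dim X))"
    unfolding arr_char_poly_def mobius_from_arr_lattice_EA[OF N]
    unfolding arr_lattice_EA[OF N] range_zero_sum_space
    by (simp add: sum.insert)
  also have "(\<Sum>X\<in>?L. monom (mobius_A X) (dim X))
      = (\<Sum>K :: 'n set | 2 \<le> card K. monom ((-1) ^ (CARD('n) - card K)) (card K - 1))"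
  proof -
    have "monom (mobius_A (zero_sum_space K :: (real^'n) set)) (dim (zero_sum_space K :: (real^'n) set))
        = monom ((-1) ^ (CARD('n) - card K)) (card K - 1)" if "2 \<le> card K" for K :: "'n set"
    proof -
      have "K \<noteq> {}" using that by auto
      then show ?thesis using that by (simp add: mobius_A_zero_sum_space dim_zero_sum_space)
    qed
    then show ?thesis by (subst sum.reindex[OF inj_on_zero_sum_space]) (auto intro!: sum.cong)
  qed
  also have "\<dots> = (\<Sum>k=2..CARD('n). of_nat (CARD('n) choose k) * monom ((-1) ^ (CARD('n) - k)) (k - 1))"
    using sum_subsets_by_card[where S = "UNIV :: 'n set" and P = "\<lambda>k. 2 \<le> k"
        and h = "\<lambda>k. monom ((-1::int) ^ (CARD('n) - k)) (k - 1)"]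
    by (simp add: Collect_le_ge_eq_atLeastAtMost)
  finally show ?thesis by (simp add: mobius_A_def)
qed

lemma of_nat_mult_monom: "(of_nat c :: 'a::comm_semiring_1 poly) * monom a i = monom (of_nat c * a) i"
  by (simp add: of_nat_monom mult_monom)

lemma int_mult_pow2_minus_2:
  assumes "1 \<le> k"
  shows "int (c * (2 ^ k - 2)) = int c * (2 ^ k - 2)"
proof -
  have "(2::nat) ^ 1 \<le> 2 ^ k" using assms by (rule power_increasing) simp
  then show ?thesis by (simp add: of_nat_diff)
qed

lemma of_nat_count_mult_monom:
  assumes "1 \<le> k"
  shows "(of_nat (c * (2 ^ k - 2)) :: int poly) * monom 1 i = monom (int c * (2 ^ k - 2)) i"
  by (simp only: of_nat_mult_monom mult_1_right int_mult_pow2_minus_2[OF assms])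

lemma face_poly_polytopeA:
  assumes "CARD('n::finite) = n + 1"
  shows "face_poly_polytope (polytopeA :: (real^'n) set)
           = (\<Sum>i<n. monom (int ((n+1) choose (i+2)) * (2^(i+2) - 2)) i)"
proof -
  have "face_poly_polytope (polytopeA :: (real^'n) set)
      = (\<Sum>k\<in>{0 + 2..<n + 2}. of_nat (((n+1) choose k) * (2 ^ k - 2)) * monom (1::int) (k - 2))"
    unfolding face_poly_polytopeA_eq_sum sum_disjoint_pairs_by_card[where g = "\<lambda>k. monom (1::int) (k - 2)"]
      assms
    by (intro sum.cong) auto
  also have "\<dots> = (\<Sum>i<n. of_nat (((n+1) choose (i+2)) * (2 ^ (i+2) - 2)) * monom (1::int) i)"
    by (simp only: sum.shift_bounds_nat_ivl atLeast0LessThan add_diff_cancel_right')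
  also have "\<dots> = (\<Sum>i<n. monom (int ((n+1) choose (i+2)) * (2^(i+2) - 2)) i)"
    by (rule sum.cong[OF refl], rule of_nat_count_mult_monom) simp
  finally show ?thesis .
qed

lemma arr_face_poly_EA:
  assumes "CARD('n::finite) = n + 1" "n \<ge> 1"
  shows "arr_face_poly (EA :: (real^'n) set) arrA
           = 1 + (\<Sum>i\<in>{1..n}. monom (int ((n+1) choose (i+1)) * (2^(i+1) - 2)) i)"
proof -
  have N: "2 \<le> CARD('n)" using assms by simp
  have "arr_face_poly (EA :: (real^'n) set) arrA
      = 1 + (\<Sum>k\<in>{1 + 1..n + 1}. of_nat (((n+1) choose k) * (2 ^ k - 2)) * monom (1::int) (k - 1))"
    unfolding arr_face_poly_EA_eq_sum[OF N]
      sum_disjoint_pairs_by_card[where g = "\<lambda>k. monom (1::int) (k - 1)"] assms(1)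
    by (intro arg_cong2[where f = "(+)"] refl sum.cong) auto
  also have "\<dots> = 1 + (\<Sum>i=1..n. of_nat (((n+1) choose (i+1)) * (2 ^ (i+1) - 2)) * monom (1::int) i)"
    by (simp only: sum.shift_bounds_cl_nat_ivl add_diff_cancel_right')
  also have "\<dots> = 1 + (\<Sum>i\<in>{1..n}. monom (int ((n+1) choose (i+1)) * (2^(i+1) - 2)) i)"
    by (rule arg_cong2[where f = "(+)"], rule refl, rule sum.cong[OF refl], rule of_nat_count_mult_monom)
      simp
  finally show ?thesis .
qed

lemma arr_char_poly_EA:
  assumes "CARD('n::finite) = n + 1" "n \<ge> 1"
  shows "arr_char_poly (EA :: (real^'n) set) arrA
           = monom ((-1)^n * int n) 0
             + (\<Sum>k\<in>{1..n}. monom (int ((n+1) choose (k+1)) * (-1)^(n-k)) k)"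
proof -
  have N: "2 \<le> CARD('n)" using assms by simp
  have "arr_char_poly (EA :: (real^'n) set) arrA
      = monom ((-1)^n * int n) 0
        + (\<Sum>k\<in>{1 + 1..n + 1}. of_nat ((n+1) choose k) * monom ((-1::int) ^ (n + 1 - k)) (k - 1))"
    unfolding arr_char_poly_EA_eq_sum[OF N] assms(1)
    by (intro arg_cong2[where f = "(+)"] sum.cong) auto
  also have "\<dots> = monom ((-1)^n * int n) 0
        + (\<Sum>k=1..n. of_nat ((n+1) choose (k+1)) * monom ((-1::int) ^ (n + 1 - (k + 1))) k)"
    by (simp only: sum.shift_bounds_cl_nat_ivl add_diff_cancel_right')
  also have "\<dots> = monom ((-1)^n * int n) 0
        + (\<Sum>k\<in>{1..n}. monom (int ((n+1) choose (k+1)) * (-1)^(n-k)) k)"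
    by (simp only: of_nat_mult_monom add_diff_cancel_right)
  finally show ?thesis .
qed

lemma coeff_one_minus_X_power: "coeff ([:1, -1:] ^ i) j = (-1) ^ j * int (i choose j)"
proof (cases "j \<le> i")
  case False
  then have "degree ([:1, -1:] ^ i :: int poly) < j"
    using degree_power_le[of "[:1, -1:] :: int poly" i] by simp
  then show ?thesis using False by (simp add: coeff_eq_0 binomial_eq_0)
qed (simp add: coeff_linear_poly_power)

text \<open>The two expressions for \<open>\<chi>\<^sub>\<H>\<close> agree by the hockey-stick identity
  \<open>\<Sum>\<^sub>i\<^sub>=\<^sub>1\<^sup>n (i choose k) = (n+1 choose k+1)\<close> for \<open>k \<ge> 1\<close>.\<close>
lemma smult_sum_one_minus_X_powers:
  "smult ((-1)^n) (\<Sum>i\<in>{1..n}. [:1, -1:]^i)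
    = monom ((-1)^n * int n) 0 + (\<Sum>k\<in>{1..n}. monom (int ((n+1) choose (k+1)) * (-1)^(n-k)) k)"
proof (rule poly_eqI)
  fix j
  have lhs: "coeff (smult ((-1)^n) (\<Sum>i\<in>{1..n}. [:1, -1:]^i)) j
      = (-1)^n * (-1)^j * (\<Sum>i\<in>{1..n}. int (i choose j))"
    by (simp add: coeff_sum coeff_one_minus_X_power sum_distrib_left mult.assoc)
  have rhs: "coeff (monom ((-1)^n * int n) 0
        + (\<Sum>k\<in>{1..n}. monom (int ((n+1) choose (k+1)) * (-1)^(n-k)) k)) j
      = (if j = 0 then (-1)^n * int n else 0)
        + (if j \<in> {1..n} then int ((n+1) choose (j+1)) * (-1)^(n-j) else 0)"
    by (simp add: coeff_sum)
  show "coeff (smult ((-1)^n) (\<Sum>i\<in>{1..n}. [:1, -1:]^i)) j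
      = coeff (monom ((-1)^n * int n) 0
        + (\<Sum>k\<in>{1..n}. monom (int ((n+1) choose (k+1)) * (-1)^(n-k)) k)) j"
  proof (cases "j = 0")
    case False
    have "(\<Sum>i\<in>{1..n}. i choose j) = (\<Sum>i\<le>n. i choose j)"
      using False by (intro sum.mono_neutral_left) auto
    also have "\<dots> = (n+1) choose (j+1)" by (simp add: sum_choose_upper)
    finally have hockey: "(\<Sum>i\<in>{1..n}. int (i choose j)) = int ((n+1) choose (j+1))"
      by (metis of_nat_sum)
    show ?thesis
    proof (cases "j \<le> n")
      case True
      then obtain d where n: "n = d + j" using le_iff_add by (metis add.commute)
      then have "(-1::int)^n * (-1)^j = (-1)^(n-j)"
        by (simp add: power_add mult.assoc)
      then show ?thesis unfolding lhs rhs using hockey True False by simp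
    next
      case False
      then show ?thesis unfolding lhs rhs using hockey by (simp add: binomial_eq_0)
    qed
  qed (unfold lhs rhs, simp)
qed

theorem proposition4p3:
  fixes n :: nat
  assumes "CARD('n::finite) = n + 1" and "n \<ge> 1"
  shows "(face_poly_polytope (polytopeA :: (real^'n) set)
           = (\<Sum>i<n. monom (int ((n+1) choose (i+2)) * (2^(i+2) - 2)) i))
       \<and> (arr_face_poly (EA :: (real^'n) set) arrA
           = 1 + (\<Sum>i\<in>{1..n}. monom (int ((n+1) choose (i+1)) * (2^(i+1) - 2)) i))
       \<and> (arr_char_poly (EA :: (real^'n) set) arrA
           = monom ((-1)^n * int n) 0
             + (\<Sum>k\<in>{1..n}. monom (int ((n+1) choose (k+1)) * (-1)^(n-k)) k))
       \<and> (arr_char_poly (EA :: (real^'n) set) arrA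
           = smult ((-1)^n) (\<Sum>i\<in>{1..n}. [:1, -1:]^i))"
  using face_poly_polytopeA[OF assms(1)] arr_face_poly_EA[OF assms] arr_char_poly_EA[OF assms]
    smult_sum_one_minus_X_powers[of n]
  by simp

end
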